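(* Assume (SH). If $x\in\operatorname{dom}f$ satisfies $T(x)=T$ (i.e., $f_t(x)=f(x)$ for all $t\in T$), then \[ \partial f(x)=\bigcap_{\varepsilon>0}\overline{\operatorname{co}}\Big(\bigcup_{t\in T}\partial_\varepsilon f_t(x)\Big). \]
   Context: $X$ is a real separated locally convex space with dual $X^*$ carrying the weak$^*$ topology. $T$ is a nonempty index set, $\{f_t: t\in T\}$ are proper convex lsc functions $X\to\mathbb{R}\cup\{+\infty\}$, $f:=\sup_{t\in T}f_t$. $T(x):=\{t\in T: f_t(x)=f(x)\}$. $\partial_\varepsilon g(x)$ is the $\varepsilon$-subdifferential, $\partial=\partial_0$. $\overline{\operatorname{co}}$ is the weak$^*$-closed convex hull. (SH): $T$ is compact Hausdorff and $t\mapsto f_t(z)$ is upper semicontinuous on $T$ for each $z\in X$. *)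

theory Defs
  imports "HOL-Analysis.Analysis" "HOL-Library.Extended_Real"
begin

definition sep_lcs :: "'a::real_vector topology \<Rightarrow> bool" where
  "sep_lcs tau \<longleftrightarrow>
     topspace tau = UNIV \<and> Hausdorff_space tau \<and>
     continuous_map (prod_topology tau tau) tau (\<lambda>(x, y). x + y) \<and>
     continuous_map (prod_topology euclideanreal tau) tau (\<lambda>(c, x). c *\<^sub>R x) \<and>
     (\<forall>U x. openin tau U \<and> x \<in> U \<longrightarrow> (\<exists>V. openin tau V \<and> convex V \<and> x \<in> V \<and> V \<subseteq> U))"

definition tdual :: "'a::real_vector topology \<Rightarrow> ('a \<Rightarrow> real) set" where
  "tdual tau = {\<phi>. linear \<phi> \<and> continuous_map tau euclideanreal \<phi>}"

definition weak_star :: "'a::real_vector topology \<Rightarrow> ('a \<Rightarrow> real) topology" where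
  "weak_star tau = subtopology (powertop_real UNIV) (tdual tau)"

definition fconvex :: "('a \<Rightarrow> real) set \<Rightarrow> bool" where
  "fconvex S \<longleftrightarrow> (\<forall>\<phi>\<in>S. \<forall>\<psi>\<in>S. \<forall>u::real. 0 \<le> u \<and> u \<le> 1 \<longrightarrow>
      (\<lambda>x. u * \<phi> x + (1 - u) * \<psi> x) \<in> S)"

definition wstar_cch :: "'a::real_vector topology \<Rightarrow> ('a \<Rightarrow> real) set \<Rightarrow> ('a \<Rightarrow> real) set" where
  "wstar_cch tau A = (\<lambda>S. fconvex S \<and> closedin (weak_star tau) S) hull A"

definition proper_fun :: "('a \<Rightarrow> ereal) \<Rightarrow> bool" where
  "proper_fun g \<longleftrightarrow> (\<forall>x. g x \<noteq> -\<infinity>) \<and> (\<exists>x. g x \<noteq> \<infinity>)"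

definition convex_fun :: "('a::real_vector \<Rightarrow> ereal) \<Rightarrow> bool" where
  "convex_fun g \<longleftrightarrow> (\<forall>x y. \<forall>u::real. 0 \<le> u \<and> u \<le> 1 \<longrightarrow>
      g (u *\<^sub>R x + (1 - u) *\<^sub>R y) \<le> ereal u * g x + ereal (1 - u) * g y)"

definition lsc_fun :: "'a topology \<Rightarrow> ('a \<Rightarrow> ereal) \<Rightarrow> bool" where
  "lsc_fun tau g \<longleftrightarrow> (\<forall>c::real. closedin tau {x \<in> topspace tau. g x \<le> ereal c})"

text \<open>epsilon-subdifferential; empty outside the effective domain.\<close>
definition eps_subdiff :: "'a::real_vector topology \<Rightarrow> real \<Rightarrow> ('a \<Rightarrow> ereal) \<Rightarrow> 'a \<Rightarrow> ('a \<Rightarrow> real) set" where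
  "eps_subdiff tau \<epsilon> g x = {\<phi> \<in> tdual tau. g x \<noteq> \<infinity> \<and>
      (\<forall>y. g y \<ge> g x + ereal (\<phi> y - \<phi> x - \<epsilon>))}"

definition usc_on :: "'i topology \<Rightarrow> ('i \<Rightarrow> ereal) \<Rightarrow> bool" where
  "usc_on Ttop h \<longleftrightarrow> (\<forall>c::real. openin Ttop {t \<in> topspace Ttop. h t < ereal c})"

end

theory Submission
  imports Defs "HOL-Library.Function_Algebras"
begin

text \<open>
  Every epsilon-subgradient at x of an active function F t is one of the supremum f, and the
  epsilon-subdifferential of f is weak-star closed and convex; intersecting over epsilon gives the
  inclusion from right to left.

  Conversely, let \<open>\<phi>\<close> be a subgradient of f at x lying outside the weak-star closed convex hull
  for some \<open>\<epsilon> > 0\<close>. A weak-star continuous functional on the dual is an evaluation, so some z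
  and \<open>\<beta> < \<phi> z\<close> bound every epsilon-subgradient of every F t at z by \<open>\<beta>\<close>. For a single proper
  convex lsc function h, separating (in X times the reals) the cone over the shifted epigraph from
  a cylinder around z shows: if \<open>h (x + s z) \<ge> h x + s \<phi> z - \<epsilon>\<close> for all \<open>s > 0\<close>, then some
  epsilon-subgradient \<open>\<psi>\<close> has \<open>\<psi> z > \<beta>\<close>. So each F t drops below this line somewhere on the ray
  \<open>x + s z\<close>. By upper semicontinuity in t and compactness, finitely many step lengths s cover all t,
  and convexity along the ray gives a uniform gap at the shortest one a:
  \<open>F t (x + a z) \<le> f x + a \<phi> z - \<delta>\<close> for all t, contradicting the subgradient inequality for \<open>\<phi>\<close>.
\<close>

text \<open>Pointwise vector space structure on functionals, so that the algebraic separation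
  theorem applies to sets of functionals.\<close>

instantiation "fun" :: (type, real_vector) real_vector
begin
definition scaleR_fun :: "real \<Rightarrow> ('a \<Rightarrow> 'b) \<Rightarrow> 'a \<Rightarrow> 'b" where
  "scaleR_fun r f = (\<lambda>x. r *\<^sub>R f x)"
instance by standard (auto simp: scaleR_fun_def fun_eq_iff scaleR_add_right scaleR_add_left)
end

lemma scaleR_fun_apply [simp]: "(r *\<^sub>R f) x = r *\<^sub>R f x"
  by (simp add: scaleR_fun_def)

section \<open>Hahn-Banach\<close>

definition sublinear :: "('v::real_vector \<Rightarrow> real) \<Rightarrow> bool" where
  "sublinear p \<longleftrightarrow> (\<forall>v w. p (v + w) \<le> p v + p w) \<and> (\<forall>c v. 0 < c \<longrightarrow> p (c *\<^sub>R v) = c * p v)"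

lemma sublinear_add: "sublinear p \<Longrightarrow> p (v + w) \<le> p v + p w"
  by (simp add: sublinear_def)

lemma sublinear_scaleR: "sublinear p \<Longrightarrow> 0 < c \<Longrightarrow> p (c *\<^sub>R v) = c * p v"
  by (simp add: sublinear_def)

lemma sublinear_zero: "sublinear p \<Longrightarrow> p 0 = 0"
  using sublinear_scaleR[of p 2 0] by simp

lemma sublinear_scaleR_ge: "sublinear p \<Longrightarrow> c * p v \<le> p (c *\<^sub>R v)"
proof (cases c "0::real" rule: linorder_cases)
  case less
  assume p: "sublinear p"
  have "p 0 \<le> p (c *\<^sub>R v) + p ((- c) *\<^sub>R v)"
    using sublinear_add[OF p, of "c *\<^sub>R v" "(- c) *\<^sub>R v"] by (simp add: scaleR_left_distrib[symmetric])
  moreover have "p ((- c) *\<^sub>R v) = - c * p v"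
    using less p by (simp add: sublinear_scaleR del: scaleR_minus_left)
  ultimately show ?thesis
    using p by (simp add: sublinear_zero)
qed (simp_all add: sublinear_zero sublinear_scaleR)

definition dominated_graph :: "('v::real_vector \<Rightarrow> real) \<Rightarrow> ('v \<times> real) set \<Rightarrow> bool" where
  "dominated_graph p G \<longleftrightarrow> subspace G \<and> (\<forall>(v, r)\<in>G. r \<le> p v)"

lemma dominated_graph_subspace: "dominated_graph p G \<Longrightarrow> subspace G"
  by (simp add: dominated_graph_def)

lemma dominated_graph_line:
  assumes "sublinear p"
  shows "dominated_graph p (span {(x0, p x0)})"
  using sublinear_scaleR_ge[OF assms]
  by (simp add: dominated_graph_def subspace_span) (auto simp: span_singleton)

lemma dominated_graph_Union_chain:
  assumes "C \<noteq> {}" "\<And>G. G \<in> C \<Longrightarrow> dominated_graph p G"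
    and chain: "\<And>G H. G \<in> C \<Longrightarrow> H \<in> C \<Longrightarrow> G \<subseteq> H \<or> H \<subseteq> G"
  shows "dominated_graph p (\<Union>C)"
  unfolding dominated_graph_def subspace_def
proof (intro conjI ballI allI)
  have sub: "\<And>G. G \<in> C \<Longrightarrow> subspace G" and dom: "\<And>G. G \<in> C \<Longrightarrow> \<forall>(v, r)\<in>G. r \<le> p v"
    using assms(2) by (auto simp: dominated_graph_def)
  show "0 \<in> \<Union>C"
    using assms(1) sub subspace_0 by blast
  show "c *\<^sub>R g \<in> \<Union>C" if "g \<in> \<Union>C" for c g
    using that sub subspace_scale by blast
  show "g + h \<in> \<Union>C" if gh: "g \<in> \<Union>C" "h \<in> \<Union>C" for g h
  proof -
    obtain G H where "G \<in> C" "H \<in> C" "g \<in> G" "h \<in> H"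
      using gh by blast
    moreover have "G \<subseteq> H \<or> H \<subseteq> G"
      using chain \<open>G \<in> C\<close> \<open>H \<in> C\<close> by blast
    ultimately show ?thesis
      using sub subspace_add by blast
  qed
  show "case g of (v, r) \<Rightarrow> r \<le> p v" if "g \<in> \<Union>C" for g
    using that dom by blast
qed

lemma dominated_graph_unique:
  assumes "sublinear p" "dominated_graph p G" "(v, r) \<in> G" "(v, r') \<in> G"
  shows "r = r'"
proof -
  have sub: "subspace G" and dom: "\<And>w s. (w, s) \<in> G \<Longrightarrow> s \<le> p w"
    using assms(2) by (auto simp: dominated_graph_def)
  have "(0, r - r') \<in> G" "(0, r' - r) \<in> G"
    using subspace_diff[OF sub assms(3,4)] subspace_diff[OF sub assms(4,3)] by simp_all
  then have "r - r' \<le> p 0" "r' - r \<le> p 0"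
    by (auto dest: dom)
  then show ?thesis
    using sublinear_zero[OF assms(1)] by simp
qed

lemma dominated_graph_extension_value:
  assumes p: "sublinear p" and G: "dominated_graph p G"
  obtains c where "\<And>s a. (s, a) \<in> G \<Longrightarrow> a - p (s - y) \<le> c \<and> c \<le> p (s + y) - a"
proof -
  have sub: "subspace G" and dom: "\<And>w s. (w, s) \<in> G \<Longrightarrow> s \<le> p w"
    using G by (auto simp: dominated_graph_def)
  have key: "a1 - p (s1 - y) \<le> p (s2 + y) - a2" if "(s1, a1) \<in> G" "(s2, a2) \<in> G" for s1 a1 s2 a2
  proof -
    have "a1 + a2 \<le> p ((s1 - y) + (s2 + y))"
      using dom subspace_add[OF sub that] by fastforce
    also have "\<dots> \<le> p (s1 - y) + p (s2 + y)"
      by (rule sublinear_add[OF p])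
    finally show ?thesis by simp
  qed
  define S where "S = {a - p (s - y) | s a. (s, a) \<in> G}"
  have "(0, 0) \<in> G"
    using subspace_0[OF sub] by (simp add: zero_prod_def)
  then have "S \<noteq> {}" "bdd_above S"
    unfolding S_def bdd_above_def using key by blast+
  then show ?thesis
    by (intro that[of "Sup S"] conjI cSup_upper cSup_least) (auto simp: S_def key)
qed

lemma dominated_graph_extension_bound:
  assumes p: "sublinear p" and G: "dominated_graph p G" and sa: "(s, a) \<in> G"
    and c: "\<And>s a. (s, a) \<in> G \<Longrightarrow> a - p (s - y) \<le> c \<and> c \<le> p (s + y) - a"
  shows "a + t * c \<le> p (s + t *\<^sub>R y)"
proof (cases t "0::real" rule: linorder_cases)
  case less
  have "((1 / - t) *\<^sub>R s, (1 / - t) * a) \<in> G"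
    using subspace_scale[OF dominated_graph_subspace[OF G] sa, of "1 / - t"] by simp
  from c[OF this] have "(- t) * ((1 / - t) * a - p ((1 / - t) *\<^sub>R s - y)) \<le> (- t) * c"
    using less by (intro mult_left_mono) auto
  moreover have "p (s + t *\<^sub>R y) = (- t) * p ((1 / - t) *\<^sub>R s - y)"
  proof -
    have "s + t *\<^sub>R y = (- t) *\<^sub>R ((1 / - t) *\<^sub>R s - y)"
      using less by (simp add: algebra_simps)
    then show ?thesis
      using less sublinear_scaleR[OF p, of "- t"] by simp
  qed
  ultimately show ?thesis
    using less by (simp add: algebra_simps)
next
  case greater
  have "((1 / t) *\<^sub>R s, (1 / t) * a) \<in> G"
    using subspace_scale[OF dominated_graph_subspace[OF G] sa, of "1 / t"] by simp
  from c[OF this] have "t * c \<le> t * (p ((1 / t) *\<^sub>R s + y) - (1 / t) * a)"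
    using greater by (intro mult_left_mono) auto
  moreover have "p (s + t *\<^sub>R y) = t * p ((1 / t) *\<^sub>R s + y)"
  proof -
    have "s + t *\<^sub>R y = t *\<^sub>R ((1 / t) *\<^sub>R s + y)"
      using greater by (simp add: algebra_simps)
    then show ?thesis
      using greater sublinear_scaleR[OF p, of t] by simp
  qed
  ultimately show ?thesis
    using greater by (simp add: algebra_simps)
qed (use G sa in \<open>auto simp: dominated_graph_def\<close>)

lemma dominated_graph_extend:
  assumes p: "sublinear p" and G: "dominated_graph p G"
  obtains G' r where "dominated_graph p G'" "G \<subseteq> G'" "(y, r) \<in> G'"
proof -
  obtain c where c: "\<And>s a. (s, a) \<in> G \<Longrightarrow> a - p (s - y) \<le> c \<and> c \<le> p (s + y) - a"
    using dominated_graph_extension_value[OF p G] by blast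
  define G' where "G' = span (insert (y, c) G)"
  have bounded: "r \<le> p v" if vr: "(v, r) \<in> G'" for v r
  proof -
    obtain t where "(v, r) - t *\<^sub>R (y, c) \<in> span G"
      using vr unfolding G'_def span_insert by blast
    moreover have "span G = G"
      using dominated_graph_subspace[OF G] by (simp add: span_eq_iff)
    ultimately have "(v - t *\<^sub>R y, r - t * c) \<in> G"
      by simp
    from dominated_graph_extension_bound[OF p G this c, of t] show ?thesis
      by simp
  qed
  have "subspace G'"
    by (simp add: G'_def subspace_span)
  then have "dominated_graph p G'"
    using bounded by (auto simp: dominated_graph_def)
  moreover have "G \<subseteq> G'"
    unfolding G'_def by (meson span_superset subset_insertI subset_trans)
  moreover have "(y, c) \<in> G'"
    unfolding G'_def by (simp add: span_base)
  ultimately show ?thesis by (rule that)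
qed

theorem hahn_banach_sublinear:
  fixes p :: "'v::real_vector \<Rightarrow> real"
  assumes p: "sublinear p"
  obtains L :: "'v \<Rightarrow> real" where "linear L" "\<And>v. L v \<le> p v" "L x0 = p x0"
proof -
  define G0 where "G0 = span {(x0, p x0)}"
  define \<A> where "\<A> = {G. dominated_graph p G \<and> G0 \<subseteq> G}"
  have "\<exists>M\<in>\<A>. \<forall>G\<in>\<A>. M \<subseteq> G \<longrightarrow> G = M"
  proof (rule Zorn_Lemma2, intro ballI)
    fix C assume C: "C \<in> chains \<A>"
    show "\<exists>U\<in>\<A>. \<forall>G\<in>C. G \<subseteq> U"
    proof (cases "C = {}")
      case False
      have CA: "C \<subseteq> \<A>" and chain: "\<And>G H. G \<in> C \<Longrightarrow> H \<in> C \<Longrightarrow> G \<subseteq> H \<or> H \<subseteq> G"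
        using C by (auto simp: chains_def chain_subset_def)
      have "dominated_graph p (\<Union>C)"
        using dominated_graph_Union_chain[OF False _ chain] CA by (auto simp: \<A>_def)
      moreover have "G0 \<subseteq> \<Union>C"
        using False CA by (auto simp: \<A>_def)
      ultimately show ?thesis
        by (intro bexI[of _ "\<Union>C"]) (auto simp: \<A>_def)
    qed (use dominated_graph_line[OF p] in \<open>auto simp: \<A>_def G0_def\<close>)
  qed
  then obtain M where M: "dominated_graph p M" "G0 \<subseteq> M"
    and max: "\<And>G. dominated_graph p G \<Longrightarrow> M \<subseteq> G \<Longrightarrow> G = M"
    by (auto simp: \<A>_def)
  have total: "\<exists>r. (v, r) \<in> M" for v
    using dominated_graph_extend[OF p M(1), of v] max by metis
  define L where "L v = (THE r. (v, r) \<in> M)" for v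
  have LM: "(v, r) \<in> M \<longleftrightarrow> r = L v" for v r
    using total[of v] dominated_graph_unique[OF p M(1)] unfolding L_def by (metis theI)
  have sub: "subspace M"
    using M(1) by (simp add: dominated_graph_def)
  have "linear L"
  proof (rule linearI)
    show "L (v + w) = L v + L w" for v w
      using subspace_add[OF sub, of "(v, L v)" "(w, L w)"] LM by simp
    show "L (c *\<^sub>R v) = c *\<^sub>R L v" for c v
      using subspace_scale[OF sub, of "(v, L v)" c] LM by simp
  qed
  moreover have "L v \<le> p v" for v
    using M(1) LM[of v "L v"] by (auto simp: dominated_graph_def)
  moreover have "L x0 = p x0"
    using M(2) span_base[of "(x0, p x0)" "{(x0, p x0)}"] LM by (auto simp: G0_def)
  ultimately show ?thesis by (rule that)
qed

section \<open>Separation of convex sets\<close>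

definition minkowski_functional :: "'v::real_vector set \<Rightarrow> 'v \<Rightarrow> real" where
  "minkowski_functional U v = Inf {r. 0 < r \<and> (1 / r) *\<^sub>R v \<in> U}"

context
  fixes U :: "'v::real_vector set"
  assumes convex: "convex U" and zero: "0 \<in> U" and absorbing: "\<And>v. \<exists>e>0. e *\<^sub>R v \<in> U"
begin

private abbreviation "radii v \<equiv> {r. 0 < r \<and> (1 / r) *\<^sub>R v \<in> U}"

private lemma radii_nonempty: "radii v \<noteq> {}"
proof -
  obtain e where "e > 0" "e *\<^sub>R v \<in> U"
    using absorbing by blast
  then have "1 / e \<in> radii v" by simp
  then show ?thesis by blast
qed

private lemma radii_bdd_below: "bdd_below (radii v)"
  by (rule bdd_belowI[of _ 0]) auto

private lemma radii_upward:
  assumes "r \<in> radii v" "r \<le> r'"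
  shows "r' \<in> radii v"
proof -
  have r: "0 < r" "(1 / r) *\<^sub>R v \<in> U" and r': "0 < r'"
    using assms by auto
  have "(r / r') *\<^sub>R ((1 / r) *\<^sub>R v) + (1 - r / r') *\<^sub>R 0 \<in> U"
    by (rule convexD[OF convex r(2) zero]) (use r r' assms(2) in auto)
  then show ?thesis
    using r r' by simp
qed

private lemma radii_add:
  assumes "r \<in> radii v" "s \<in> radii w"
  shows "r + s \<in> radii (v + w)"
proof -
  have r: "0 < r" "(1 / r) *\<^sub>R v \<in> U" and s: "0 < s" "(1 / s) *\<^sub>R w \<in> U"
    using assms by auto
  have "(r / (r + s)) *\<^sub>R ((1 / r) *\<^sub>R v) + (s / (r + s)) *\<^sub>R ((1 / s) *\<^sub>R w) \<in> U"
    by (rule convexD[OF convex r(2) s(2)]) (use r s in \<open>auto simp: add_divide_distrib[symmetric]\<close>)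
  then show ?thesis
    using r s by (simp add: scaleR_add_right)
qed

lemma minkowski_functional_le: "r \<in> radii v \<Longrightarrow> minkowski_functional U v \<le> r"
  unfolding minkowski_functional_def by (rule cInf_lower[OF _ radii_bdd_below])

lemma minkowski_functional_le_one: "u \<in> U \<Longrightarrow> minkowski_functional U u \<le> 1"
  by (rule minkowski_functional_le) simp

lemma minkowski_functional_ge_one: "v \<notin> U \<Longrightarrow> 1 \<le> minkowski_functional U v"
proof (rule ccontr)
  assume "v \<notin> U" "\<not> 1 \<le> minkowski_functional U v"
  then have "Inf (radii v) < 1"
    by (simp add: minkowski_functional_def)
  then obtain r where "r \<in> radii v" "r < 1"
    using cInf_lessD[OF radii_nonempty] by blast
  then have "1 \<in> radii v"
    using radii_upward[of r v 1] by simp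
  with \<open>v \<notin> U\<close> show False by simp
qed

lemma sublinear_minkowski_functional: "sublinear (minkowski_functional U)"
  unfolding sublinear_def
proof (intro conjI allI impI)
  fix v w
  have "minkowski_functional U (v + w) - s \<le> r" if "r \<in> radii v" "s \<in> radii w" for r s
    using minkowski_functional_le[OF radii_add[OF that]] by simp
  then have "minkowski_functional U (v + w) - s \<le> minkowski_functional U v" if s: "s \<in> radii w" for s
    unfolding minkowski_functional_def[of U v] using s by (intro cInf_greatest[OF radii_nonempty]) blast
  then have "minkowski_functional U (v + w) - minkowski_functional U v \<le> s" if s: "s \<in> radii w" for s
    using s by (simp add: algebra_simps)
  then have "minkowski_functional U (v + w) - minkowski_functional U v \<le> minkowski_functional U w"
    unfolding minkowski_functional_def[of U w] by (intro cInf_greatest[OF radii_nonempty]) blast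
  then show "minkowski_functional U (v + w) \<le> minkowski_functional U v + minkowski_functional U w"
    by simp
next
  have le: "minkowski_functional U (c *\<^sub>R v) \<le> c * minkowski_functional U v" if "0 < c" for c v
  proof -
    have "minkowski_functional U (c *\<^sub>R v) / c \<le> r" if "r \<in> radii v" for r
      using minkowski_functional_le[of "c * r" "c *\<^sub>R v"] that \<open>0 < c\<close> by (simp add: field_simps)
    then have "minkowski_functional U (c *\<^sub>R v) / c \<le> minkowski_functional U v"
      unfolding minkowski_functional_def[of U v] by (intro cInf_greatest[OF radii_nonempty]) auto
    then show ?thesis
      using \<open>0 < c\<close> by (simp add: field_simps)
  qed
  fix c :: real and v :: 'v
  assume "0 < c"
  have "minkowski_functional U v \<le> (1 / c) * minkowski_functional U (c *\<^sub>R v)"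
    using le[of "1 / c" "c *\<^sub>R v"] \<open>0 < c\<close> by simp
  then show "minkowski_functional U (c *\<^sub>R v) = c * minkowski_functional U v"
    using le[OF \<open>0 < c\<close>, of v] \<open>0 < c\<close> by (simp add: field_simps)
qed

lemma separation_absorbing_convex:
  assumes "p0 \<notin> U"
  obtains L :: "'v \<Rightarrow> real" where "linear L" "1 \<le> L p0" "\<And>u. u \<in> U \<Longrightarrow> L u \<le> 1"
proof -
  obtain L where L: "linear L" "\<And>v. L v \<le> minkowski_functional U v"
    "L p0 = minkowski_functional U p0"
    using hahn_banach_sublinear[OF sublinear_minkowski_functional] by blast
  show ?thesis
  proof (rule that[OF L(1)])
    show "1 \<le> L p0"
      using minkowski_functional_ge_one[OF assms] L(3) by simp
    show "L u \<le> 1" if "u \<in> U" for u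
      using L(2)[of u] minkowski_functional_le_one[OF that] by simp
  qed
qed

end

lemma separation_convex_core:
  fixes A B :: "'v::real_vector set"
  assumes "convex A" "convex B" "A \<inter> B = {}" "b0 \<in> B"
    and core: "\<And>w. \<exists>e>0. a0 + e *\<^sub>R w \<in> A"
  obtains L :: "'v \<Rightarrow> real" where "linear L" "\<And>a b. a \<in> A \<Longrightarrow> b \<in> B \<Longrightarrow> L b \<le> L a" "L b0 + 1 \<le> L a0"
proof -
  define U where "U = (\<lambda>u. u - (b0 - a0)) ` (\<Union>b\<in>B. \<Union>a\<in>A. {b - a})"
  have U: "u \<in> U \<longleftrightarrow> (\<exists>a\<in>A. \<exists>b\<in>B. u = b - a - (b0 - a0))" for u
    unfolding U_def by blast
  have convex_U: "convex U"
    unfolding U_def using convex_differences[OF assms(2,1)] by (rule convex_translation_subtract)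
  have "a0 \<in> A"
    using core[of 0] by auto
  then have zero_U: "0 \<in> U"
    using assms(4) U[of 0] by auto
  have absorbing_U: "\<exists>e>0. e *\<^sub>R w \<in> U" for w
  proof -
    obtain e where e: "e > 0" "a0 + e *\<^sub>R (- w) \<in> A"
      using core by blast
    have "e *\<^sub>R w = b0 - (a0 + e *\<^sub>R (- w)) - (b0 - a0)"
      by simp
    then have "e *\<^sub>R w \<in> U"
      unfolding U using e(2) assms(4) by blast
    with e(1) show ?thesis by blast
  qed
  have "a0 - b0 \<notin> U"
    using assms(3) by (auto simp: U algebra_simps)
  then obtain L :: "'v \<Rightarrow> real" where L: "linear L" "1 \<le> L (a0 - b0)" "\<And>u. u \<in> U \<Longrightarrow> L u \<le> 1"
    by (rule separation_absorbing_convex[OF convex_U zero_U absorbing_U]) blast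
  show ?thesis
  proof (rule that[OF L(1)])
    show "L b \<le> L a" if "a \<in> A" "b \<in> B" for a b
    proof -
      have "L (b - a - (b0 - a0)) \<le> 1"
        using L(3) that U by blast
      then show ?thesis
        using L(2) unfolding linear_diff[OF L(1)] by linarith
    qed
    show "L b0 + 1 \<le> L a0"
      using L(2) by (simp add: linear_diff[OF L(1)])
  qed
qed

section \<open>Separated locally convex spaces\<close>

lemma sep_lcs_topspace: "sep_lcs tau \<Longrightarrow> topspace tau = UNIV"
  by (simp add: sep_lcs_def)

lemma sep_lcs_continuous_scaleR_left:
  assumes "sep_lcs tau"
  shows "continuous_map euclideanreal tau (\<lambda>c. c *\<^sub>R v)"
proof -
  have "continuous_map euclideanreal (prod_topology euclideanreal tau) (\<lambda>c. (c, v))"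
    using sep_lcs_topspace[OF assms] by (simp add: continuous_map_paired)
  moreover have "continuous_map (prod_topology euclideanreal tau) tau (\<lambda>(c, x). c *\<^sub>R x)"
    using assms by (simp add: sep_lcs_def)
  ultimately show ?thesis
    using continuous_map_compose by (fastforce simp: o_def)
qed

lemma sep_lcs_continuous_affine:
  assumes "sep_lcs tau"
  shows "continuous_map tau tau (\<lambda>v. c *\<^sub>R v + a)"
proof -
  have top: "topspace tau = UNIV"
    by (rule sep_lcs_topspace[OF assms])
  have "continuous_map tau (prod_topology euclideanreal tau) (\<lambda>v. (c, v))"
    using top by (simp add: continuous_map_paired)
  moreover have "continuous_map (prod_topology euclideanreal tau) tau (\<lambda>(c, x). c *\<^sub>R x)"
    using assms by (simp add: sep_lcs_def)
  ultimately have "continuous_map tau tau (\<lambda>v. c *\<^sub>R v)"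
    using continuous_map_compose by (fastforce simp: o_def)
  then have "continuous_map tau (prod_topology tau tau) (\<lambda>v. (c *\<^sub>R v, a))"
    using top by (simp add: continuous_map_paired)
  moreover have "continuous_map (prod_topology tau tau) tau (\<lambda>(x, y). x + y)"
    using assms by (simp add: sep_lcs_def)
  ultimately show ?thesis
    using continuous_map_compose by (fastforce simp: o_def)
qed

lemma sep_lcs_openin_affine_vimage:
  assumes "sep_lcs tau" "openin tau W"
  shows "openin tau {v. c *\<^sub>R v + a \<in> W}"
  using openin_continuous_map_preimage[OF sep_lcs_continuous_affine[OF assms(1)] assms(2)]
    sep_lcs_topspace[OF assms(1)] by simp

lemma sep_lcs_absorbing:
  assumes "sep_lcs tau" "openin tau W" "0 \<in> W"
  obtains e where "e > 0" "\<And>c. \<bar>c\<bar> < e \<Longrightarrow> c *\<^sub>R v \<in> W"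
proof -
  have "open {c. c *\<^sub>R v \<in> W}"
    using openin_continuous_map_preimage[OF sep_lcs_continuous_scaleR_left[OF assms(1)] assms(2)]
    by simp
  moreover have "0 \<in> {c. c *\<^sub>R v \<in> W}"
    using assms(3) by simp
  ultimately obtain e where "e > 0" "\<And>c. dist c 0 < e \<Longrightarrow> c *\<^sub>R v \<in> W"
    unfolding open_dist by blast
  then show ?thesis
    using that by (simp add: dist_real_def)
qed

lemma sep_lcs_symmetric_convex_nbhd:
  assumes "sep_lcs tau" "openin tau W" "0 \<in> W"
  obtains V where "openin tau V" "convex V" "0 \<in> V" "V \<subseteq> W" "\<And>v. v \<in> V \<Longrightarrow> - v \<in> V"
proof -
  obtain V0 where V0: "openin tau V0" "convex V0" "0 \<in> V0" "V0 \<subseteq> W"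
    using assms unfolding sep_lcs_def by blast
  have neg: "uminus ` V0 = {v. (- 1) *\<^sub>R v + 0 \<in> V0}"
    by (force simp: image_iff)
  show ?thesis
  proof (rule that[of "V0 \<inter> uminus ` V0"])
    show "openin tau (V0 \<inter> uminus ` V0)"
      unfolding neg by (intro openin_Int V0(1) sep_lcs_openin_affine_vimage assms(1))
    show "convex (V0 \<inter> uminus ` V0)"
      using V0(2) by (intro convex_Int convex_negations)
  qed (use V0 in \<open>auto simp: image_iff\<close>)
qed

lemma continuous_map_linear_bounded_on_nbhd:
  fixes L :: "'a::real_vector \<Rightarrow> real"
  assumes X: "sep_lcs tau" and L: "linear L" and V: "openin tau V" "0 \<in> V"
    and bounded: "\<And>v. v \<in> V \<Longrightarrow> \<bar>L v\<bar> \<le> K"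
  shows "continuous_map tau euclideanreal L"
  unfolding continuous_map_def
proof (intro conjI allI impI)
  show "L \<in> topspace tau \<rightarrow> topspace euclideanreal" by simp
  fix O' assume "openin euclideanreal O'"
  then have "open O'" by simp
  show "openin tau {y \<in> topspace tau. L y \<in> O'}"
  proof (rule openin_subopen[THEN iffD2], intro ballI)
    fix y assume "y \<in> {y \<in> topspace tau. L y \<in> O'}"
    then obtain e where e: "e > 0" "\<And>r. dist r (L y) < e \<Longrightarrow> r \<in> O'"
      using \<open>open O'\<close> unfolding open_dist by auto
    define M where "M = \<bar>K\<bar> + 1"
    have M: "M > 0" "K < M"
      by (auto simp: M_def)
    define N where "N = {w. (M / e) *\<^sub>R w + (- (M / e) *\<^sub>R y) \<in> V}"
    have "N \<subseteq> {y \<in> topspace tau. L y \<in> O'}"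
    proof
      fix w assume "w \<in> N"
      then have "(M / e) *\<^sub>R (w - y) \<in> V"
        by (simp add: N_def scaleR_diff_right)
      then have "(M / e) * \<bar>L w - L y\<bar> \<le> K"
        using bounded linear_scale[OF L] linear_diff[OF L] e(1) M(1) by (fastforce simp: abs_mult)
      then have "M * \<bar>L w - L y\<bar> \<le> K * e"
        using e(1) by (simp add: field_simps)
      also have "\<dots> < M * e"
        using e(1) M(2) by simp
      finally have "\<bar>L w - L y\<bar> < e"
        using M(1) by simp
      then show "w \<in> {y \<in> topspace tau. L y \<in> O'}"
        using e(2) sep_lcs_topspace[OF X] by (simp add: dist_real_def)
    qed
    moreover have "openin tau N"
      unfolding N_def by (rule sep_lcs_openin_affine_vimage[OF X V(1)])
    moreover have "y \<in> N"
      using V(2) by (simp add: N_def)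
    ultimately show "\<exists>T. openin tau T \<and> y \<in> T \<and> T \<subseteq> {y \<in> topspace tau. L y \<in> O'}"
      by blast
  qed
qed

lemma lsc_fun_openin_superlevel:
  assumes "sep_lcs tau" "lsc_fun tau h"
  shows "openin tau {y. ereal c < h y}"
proof -
  have "openin tau (topspace tau - {y \<in> topspace tau. h y \<le> ereal c})"
    using assms(2) by (intro openin_diff) (auto simp: lsc_fun_def)
  moreover have "topspace tau - {y \<in> topspace tau. h y \<le> ereal c} = {y. ereal c < h y}"
    using sep_lcs_topspace[OF assms(1)] by auto
  ultimately show ?thesis by simp
qed

lemma tdual_linear: "\<psi> \<in> tdual tau \<Longrightarrow> linear \<psi>"
  by (simp add: tdual_def)

lemma tdual_lincomb:
  assumes "\<psi>1 \<in> tdual tau" "\<psi>2 \<in> tdual tau"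
  shows "(\<lambda>y. a * \<psi>1 y + b * \<psi>2 y) \<in> tdual tau"
proof -
  have "linear (\<lambda>y. a * \<psi>1 y + b * \<psi>2 y)"
    using assms unfolding tdual_def
    by (intro linearI) (auto simp: linear_add linear_scale algebra_simps)
  moreover have "continuous_map tau euclideanreal (\<lambda>y. a * \<psi>1 y + b * \<psi>2 y)"
    using assms unfolding tdual_def
    by (intro continuous_map_add continuous_map_real_mult_left) auto
  ultimately show ?thesis by (simp add: tdual_def)
qed

lemma tdual_scale: "\<psi> \<in> tdual tau \<Longrightarrow> (\<lambda>y. a * \<psi> y) \<in> tdual tau"
  using tdual_lincomb[of \<psi> tau \<psi> a 0] by simp

lemma sep_lcs_box_core:
  fixes A :: "('a::real_vector \<times> real) set"
  assumes X: "sep_lcs tau" and V: "openin tau V" "0 \<in> V" and "\<delta> > 0"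
    and box: "\<And>v \<rho>. v \<in> V \<Longrightarrow> \<bar>\<rho>\<bar> < \<delta> \<Longrightarrow> (y0 + v, r0 + \<rho>) \<in> A"
  shows "\<exists>e>0. (y0, r0) + e *\<^sub>R w \<in> A"
proof -
  obtain v \<rho> where w: "w = (v, \<rho>)" by (cases w)
  obtain e where e: "e > 0" "\<And>c. \<bar>c\<bar> < e \<Longrightarrow> c *\<^sub>R v \<in> V"
    using sep_lcs_absorbing[OF X V(1,2)] by blast
  define e' where "e' = min (e / 2) (\<delta> / (2 * (\<bar>\<rho>\<bar> + 1)))"
  have e': "e' > 0" "e' \<le> \<delta> / (2 * (\<bar>\<rho>\<bar> + 1))"
    using e(1) \<open>\<delta> > 0\<close> by (auto simp: e'_def)
  have "e' *\<^sub>R v \<in> V"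
    using e e' by (intro e(2)) (simp add: e'_def)
  have "\<bar>e' * \<rho>\<bar> < \<delta>"
  proof -
    have "\<bar>e' * \<rho>\<bar> \<le> e' * (\<bar>\<rho>\<bar> + 1)"
      using e'(1) by (simp add: abs_mult)
    also have "\<dots> \<le> (\<delta> / (2 * (\<bar>\<rho>\<bar> + 1))) * (\<bar>\<rho>\<bar> + 1)"
      using e'(2) by (intro mult_right_mono) auto
    also have "\<dots> < \<delta>"
      using \<open>\<delta> > 0\<close> by (simp add: field_simps add_pos_nonneg)
    finally show ?thesis .
  qed
  then have "(y0, r0) + e' *\<^sub>R w \<in> A"
    using box[OF \<open>e' *\<^sub>R v \<in> V\<close>] by (simp add: w)
  with e'(1) show ?thesis by blast
qed

lemma linear_times_real_split:
  fixes L :: "'a::real_vector \<times> real \<Rightarrow> real"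
  assumes "linear L"
  shows "linear (\<lambda>y. L (y, 0))" "L (y, r) = L (y, 0) + L (0, 1) * r"
proof -
  show "linear (\<lambda>y. L (y, 0))"
  proof (rule linearI)
    show "L (a + b, 0) = L (a, 0) + L (b, 0)" for a b
      using linear_add[OF assms, of "(a, 0)" "(b, 0)"] by simp
    show "L (r *\<^sub>R b, 0) = r *\<^sub>R L (b, 0)" for r b
      using linear_scale[OF assms, of r "(b, 0)"] by simp
  qed
  have "L (y, r) = L ((y, 0) + r *\<^sub>R (0, 1))" by simp
  also have "\<dots> = L (y, 0) + r * L (0, 1)"
    by (simp only: linear_add[OF assms] linear_scale[OF assms] real_scaleR_def)
  finally show "L (y, r) = L (y, 0) + L (0, 1) * r"
    by simp
qed

lemma separation_times_real:
  fixes A B :: "('a::real_vector \<times> real) set"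
  assumes X: "sep_lcs tau" and "convex A" "convex B" "A \<inter> B = {}" "b0 \<in> B"
    and V: "openin tau V" "0 \<in> V" "\<And>v. v \<in> V \<Longrightarrow> - v \<in> V" and "\<delta> > 0"
    and box: "\<And>v \<rho>. v \<in> V \<Longrightarrow> \<bar>\<rho>\<bar> < \<delta> \<Longrightarrow> (y0 + v, r0 + \<rho>) \<in> A"
  shows "\<exists>\<psi> c. \<psi> \<in> tdual tau \<and>
    (\<forall>a\<in>A. \<forall>b\<in>B. \<psi> (fst b) + c * snd b \<le> \<psi> (fst a) + c * snd a) \<and>
    \<psi> (fst b0) + c * snd b0 + 1 \<le> \<psi> y0 + c * r0"
proof -
  obtain L :: "'a \<times> real \<Rightarrow> real" where L: "linear L"
    "\<And>a b. a \<in> A \<Longrightarrow> b \<in> B \<Longrightarrow> L b \<le> L a" "L b0 + 1 \<le> L (y0, r0)"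
    using separation_convex_core[OF assms(2-5) sep_lcs_box_core[OF X V(1,2) \<open>\<delta> > 0\<close> box]] by blast
  define \<psi> where "\<psi> y = L (y, 0)" for y
  define c where "c = L (0, 1)"
  have L_split: "L (y, r) = \<psi> y + c * r" for y r
    unfolding \<psi>_def c_def by (rule linear_times_real_split(2)[OF L(1)])
  have "linear \<psi>"
    unfolding \<psi>_def by (rule linear_times_real_split(1)[OF L(1)])
  moreover have "\<bar>\<psi> v\<bar> \<le> L (y0, r0) - L b0" if "v \<in> V" for v
  proof -
    have "L b0 \<le> L (y0 + v, r0)" "L b0 \<le> L (y0 + - v, r0)"
      using L(2)[OF box[of _ 0] assms(5)] that V(3)[OF that] \<open>\<delta> > 0\<close> by (auto simp del: add_uminus_conv_diff)
    moreover have "\<psi> (- v) = - \<psi> v"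
      using linear_neg[OF \<open>linear \<psi>\<close>] .
    ultimately show ?thesis
      unfolding L_split using linear_diff[OF \<open>linear \<psi>\<close>, of y0 v]
        linear_add[OF \<open>linear \<psi>\<close>, of y0 v] by auto
  qed
  ultimately have "continuous_map tau euclideanreal \<psi>"
    by (intro continuous_map_linear_bounded_on_nbhd[OF X _ V(1,2)])
  with \<open>linear \<psi>\<close> have "\<psi> \<in> tdual tau"
    by (simp add: tdual_def)
  moreover have "\<psi> (fst b) + c * snd b \<le> \<psi> (fst a) + c * snd a" if "a \<in> A" "b \<in> B" for a b
    using L(2)[OF that] L_split[of "fst a" "snd a"] L_split[of "fst b" "snd b"] by simp
  moreover have "\<psi> (fst b0) + c * snd b0 + 1 \<le> \<psi> y0 + c * r0"
    using L(3) L_split[of "fst b0" "snd b0"] L_split[of y0 r0] by simp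
  ultimately show ?thesis
    by blast
qed

section \<open>Convex functions into the extended reals\<close>

definition ereal_epigraph :: "('a \<Rightarrow> ereal) \<Rightarrow> ('a \<times> real) set" where
  "ereal_epigraph h = {p. h (fst p) \<le> ereal (snd p)}"

lemma convex_funD_real:
  assumes "convex_fun h" "h a = ereal ra" "h b = ereal rb" "0 \<le> u" "u \<le> 1"
  shows "h (u *\<^sub>R b + (1 - u) *\<^sub>R a) \<le> ereal (u * rb + (1 - u) * ra)"
  using assms unfolding convex_fun_def by (metis plus_ereal.simps(1) times_ereal.simps(1))

lemma convex_ereal_epigraph:
  assumes "convex_fun h" "\<And>y. h y \<noteq> -\<infinity>"
  shows "convex (ereal_epigraph h)"
  unfolding convex_alt
proof (intro ballI allI impI)
  fix p q :: "'a \<times> real" and u :: real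
  assume "p \<in> ereal_epigraph h" "q \<in> ereal_epigraph h" and u: "0 \<le> u \<and> u \<le> 1"
  then have hp: "h (fst p) \<le> ereal (snd p)" and hq: "h (fst q) \<le> ereal (snd q)"
    by (auto simp: ereal_epigraph_def)
  obtain rp where rp: "h (fst p) = ereal rp"
    using hp assms(2)[of "fst p"] by (cases "h (fst p)") auto
  obtain rq where rq: "h (fst q) = ereal rq"
    using hq assms(2)[of "fst q"] by (cases "h (fst q)") auto
  have "h ((1 - u) *\<^sub>R fst p + u *\<^sub>R fst q) \<le> ereal ((1 - u) * rp + u * rq)"
    using convex_funD_real[OF assms(1) rq rp, of "1 - u"] u by (simp add: add.commute)
  also have "\<dots> \<le> ereal ((1 - u) * snd p + u * snd q)"
    using hp hq rp rq u by (auto intro!: add_mono mult_left_mono)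
  finally show "(1 - u) *\<^sub>R p + u *\<^sub>R q \<in> ereal_epigraph h"
    by (simp add: ereal_epigraph_def)
qed

lemma convex_fun_chord:
  assumes "convex_fun h" "h x = ereal r" "0 < a" "a \<le> s" "h (x + s *\<^sub>R d) = ereal R"
  shows "h (x + a *\<^sub>R d) \<le> ereal ((a / s) * R + (1 - a / s) * r)"
proof -
  have "x + a *\<^sub>R d = (a / s) *\<^sub>R (x + s *\<^sub>R d) + (1 - a / s) *\<^sub>R x"
    using assms(3,4) by (simp add: algebra_simps)
  then show ?thesis
    using convex_funD_real[OF assms(1,2,5), of "a / s"] assms(3,4) by simp
qed

text \<open>Finitely many step lengths from which the chord estimate below reaches every \<open>s \<ge> s0\<close>.\<close>

lemma finite_grid_below:
  fixes s0 \<theta> \<epsilon> :: real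
  assumes "0 < s0" "0 < \<theta>" "0 < \<epsilon>"
  obtains G where "finite G" "G \<subseteq> {s0..}"
    "\<And>s. s0 \<le> s \<Longrightarrow> \<exists>a\<in>G. a \<le> s \<and> \<epsilon> * (s - a) \<le> a * s * \<theta> / 2"
proof -
  define \<Delta> where "\<Delta> = s0 * s0 * \<theta> / (2 * \<epsilon>)"
  have \<Delta>: "0 < \<Delta>" "\<epsilon> * \<Delta> = s0 * s0 * \<theta> / 2"
    using assms by (auto simp: \<Delta>_def)
  obtain N :: nat where N: "(2 * \<epsilon> / \<theta>) / \<Delta> < real N"
    using reals_Archimedean2 by blast
  define G where "G = (\<lambda>i. s0 + real i * \<Delta>) ` {..N}"
  have "\<exists>a\<in>G. a \<le> s \<and> \<epsilon> * (s - a) \<le> a * s * \<theta> / 2" if s: "s0 \<le> s" for s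
  proof -
    define k where "k = nat \<lfloor>(s - s0) / \<Delta>\<rfloor>"
    have "real k = of_int \<lfloor>(s - s0) / \<Delta>\<rfloor>"
      using s \<Delta>(1) by (simp add: k_def)
    then have "real k \<le> (s - s0) / \<Delta>" "(s - s0) / \<Delta> < real k + 1"
      by linarith+
    then have k: "s0 + real k * \<Delta> \<le> s" "s < s0 + (real k + 1) * \<Delta>"
      using \<Delta>(1) by (simp_all add: pos_le_divide_eq pos_divide_less_eq algebra_simps)
    define a where "a = s0 + real (min k N) * \<Delta>"
    have a: "s0 \<le> a" "a \<le> s"
      using k(1) \<Delta>(1) by (auto simp: a_def min_def intro: order_trans[OF _ k(1)])
    have "\<epsilon> * (s - a) \<le> a * s * \<theta> / 2"
    proof (cases "k \<le> N")
      case True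
      then have "\<epsilon> * (s - a) \<le> \<epsilon> * \<Delta>"
        using k(2) assms(3) by (intro mult_left_mono) (auto simp: a_def algebra_simps)
      also have "\<dots> \<le> a * s * \<theta> / 2"
        using \<Delta>(2) a assms(1,2) by (simp add: mult_mono)
      finally show ?thesis .
    next
      case False
      have "2 * \<epsilon> / \<theta> < real N * \<Delta>"
        using N by (simp only: pos_divide_less_eq[OF \<Delta>(1)])
      then have "2 * \<epsilon> / \<theta> \<le> a"
        using False assms(1) by (simp add: a_def)
      then have "\<epsilon> \<le> a * \<theta> / 2"
        using assms(2) by (simp add: field_simps)
      then have "\<epsilon> * s \<le> a * \<theta> / 2 * s"
        using s assms(1) by (intro mult_right_mono) auto
      moreover have "0 \<le> \<epsilon> * a"
        using a(1) assms(1,3) by simp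
      ultimately show ?thesis
        by (simp add: algebra_simps)
    qed
    then show ?thesis
      using a(2) by (auto simp: G_def a_def)
  qed
  moreover have "G \<subseteq> {s0..}"
    using \<Delta>(1) by (auto simp: G_def)
  ultimately show ?thesis
    using that[of G] by (simp add: G_def)
qed

lemma chord_lower_bound_transfer:
  fixes a s \<epsilon> \<theta> \<gamma> r R :: real
  assumes "0 < a" "a \<le> s" "\<epsilon> * (s - a) \<le> a * s * \<theta> / 2"
    and chord: "r + a * (\<gamma> - \<theta> / 2) - \<epsilon> < (a / s) * R + (1 - a / s) * r"
  shows "r + s * (\<gamma> - \<theta>) - \<epsilon> \<le> R"
proof -
  have "(a / s) * R + (1 - a / s) * r = r + (a / s) * (R - r)"
    by (simp add: algebra_simps diff_divide_distrib)
  then have "s * (a * (\<gamma> - \<theta> / 2) - \<epsilon>) < s * ((a / s) * (R - r))"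
    using chord assms(1,2) by (intro mult_strict_left_mono) auto
  moreover have "s * ((a / s) * (R - r)) = a * (R - r)"
    using assms(1,2) by simp
  moreover have "a * (s * (\<gamma> - \<theta>) - \<epsilon>) \<le> s * (a * (\<gamma> - \<theta> / 2) - \<epsilon>)"
    using assms(3) by (simp add: algebra_simps)
  ultimately have "a * (s * (\<gamma> - \<theta>) - \<epsilon>) < a * (R - r)"
    by linarith
  then show ?thesis
    using assms(1) by simp
qed

lemma nonpos_if_nonneg_multiples_bounded:
  fixes q k :: real
  assumes "\<And>l. 0 \<le> l \<Longrightarrow> l * q \<le> k"
  shows "q \<le> 0"
proof (rule ccontr)
  assume "\<not> q \<le> 0"
  then have "((\<bar>k\<bar> + 1) / q) * q \<le> k" "0 < q"
    using assms[of "(\<bar>k\<bar> + 1) / q"] by auto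
  then show False by simp
qed

lemma linear_eq_0_if_bounded_below_on_line:
  fixes L :: "'v::real_vector \<Rightarrow> real"
  assumes "linear L" "\<And>t. c \<le> L (a + t *\<^sub>R w)"
  shows "L w = 0"
proof -
  have shift: "c \<le> L a + t * L w" for t
    using assms by (simp add: linear_add linear_scale)
  have "L w \<le> 0"
  proof (rule nonpos_if_nonneg_multiples_bounded)
    show "l * L w \<le> L a - c" for l
      using shift[of "- l"] by simp
  qed
  moreover have "- L w \<le> 0"
  proof (rule nonpos_if_nonneg_multiples_bounded)
    show "l * - L w \<le> L a - c" for l
      using shift[of l] by simp
  qed
  ultimately show ?thesis
    by simp
qed

lemma convex_cone_hull_convex_iff:
  assumes "convex C" "C \<noteq> {}"
  shows "b \<in> convex_cone hull C \<longleftrightarrow> (\<exists>c\<in>C. \<exists>l\<ge>0. b = l *\<^sub>R c)"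
  using convex_cone_hull_convex_hull_nonempty[OF assms(2)] convex_hull_eq[THEN iffD2, OF assms(1)]
  by auto

section \<open>Epsilon-subdifferentials of a proper convex lsc function\<close>

locale proper_convex_lsc_at =
  fixes tau :: "'a::real_vector topology" and h :: "'a \<Rightarrow> ereal" and x :: 'a and r :: real
  assumes lcs: "sep_lcs tau" and not_MInf: "\<And>y. h y \<noteq> -\<infinity>" and convex: "convex_fun h"
    and lsc: "lsc_fun tau h" and at_x: "h x = ereal r"
begin

lemma value_cases:
  obtains (PInf) "h y = \<infinity>" | (real) s where "h y = ereal s"
  using not_MInf[of y] by (cases "h y") auto

lemma eps_subdiff_iff:
  "\<psi> \<in> eps_subdiff tau \<epsilon> h x \<longleftrightarrow>
     \<psi> \<in> tdual tau \<and> (\<forall>y s. h y = ereal s \<longrightarrow> \<psi> y - \<psi> x - \<epsilon> \<le> s - r)"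
proof -
  have "ereal r + ereal (\<psi> y - \<psi> x - \<epsilon>) \<le> h y \<longleftrightarrow>
      (\<forall>s. h y = ereal s \<longrightarrow> \<psi> y - \<psi> x - \<epsilon> \<le> s - r)" for y
    by (cases rule: value_cases[of y]) auto
  then show ?thesis
    by (auto simp: eps_subdiff_def at_x)
qed

lemma eps_subdiff_divide:
  assumes "\<psi> \<in> tdual tau" "0 < k"
    and "\<And>y s. h y = ereal s \<Longrightarrow> \<psi> y - \<psi> x \<le> k * (s - r + \<epsilon>)"
  shows "(\<lambda>y. \<psi> y / k) \<in> eps_subdiff tau \<epsilon> h x"
proof -
  have "(\<lambda>y. (1 / k) * \<psi> y) \<in> tdual tau"
    by (rule tdual_scale[OF assms(1)])
  moreover have "\<psi> y / k - \<psi> x / k - \<epsilon> \<le> s - r" if "h y = ereal s" for y s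
    using assms(3)[OF that] assms(2) by (simp add: field_simps)
  ultimately show ?thesis
    by (simp add: eps_subdiff_iff)
qed

lemma eps_subdiff_nonempty:
  assumes "0 < \<eta>"
  obtains \<psi> where "\<psi> \<in> eps_subdiff tau \<eta> h x"
proof -
  define W where "W = {w. 1 *\<^sub>R w + x \<in> {y. ereal (r - \<eta> / 2) < h y}}"
  have "openin tau W"
    unfolding W_def by (rule sep_lcs_openin_affine_vimage[OF lcs lsc_fun_openin_superlevel[OF lcs lsc]])
  moreover have "0 \<in> W"
    using assms at_x by (simp add: W_def)
  ultimately obtain V where V: "openin tau V" "convex V" "0 \<in> V" "V \<subseteq> W" "\<And>v. v \<in> V \<Longrightarrow> - v \<in> V"
    using sep_lcs_symmetric_convex_nbhd[OF lcs] by metis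
  define A where "A = (\<lambda>v. x + v) ` V \<times> {..< r - \<eta> / 2}"
  have disjoint: "A \<inter> ereal_epigraph h = {}"
  proof (intro equals0I)
    fix p assume "p \<in> A \<inter> ereal_epigraph h"
    then obtain v where "v \<in> V" "fst p = x + v" "snd p < r - \<eta> / 2" "h (fst p) \<le> ereal (snd p)"
      by (auto simp: A_def ereal_epigraph_def)
    moreover have "ereal (r - \<eta> / 2) < h (x + v)"
      using V(4) \<open>v \<in> V\<close> by (auto simp: W_def add.commute)
    ultimately show False
      by (metis ereal_less_eq(3) leD less_le_trans order.strict_implies_order)
  qed
  have box: "(x + v, (r - \<eta> / 2 - 1) + \<rho>) \<in> A" if "v \<in> V" "\<bar>\<rho>\<bar> < 1" for v \<rho>
    using that by (auto simp: A_def)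
  have "convex A"
    unfolding A_def using V(2) by (intro convex_Times convex_translation) auto
  moreover have "(x, r) \<in> ereal_epigraph h"
    by (simp add: ereal_epigraph_def at_x)
  ultimately obtain \<psi> c where \<psi>: "\<psi> \<in> tdual tau"
    and sep: "\<forall>a\<in>A. \<forall>b\<in>ereal_epigraph h. \<psi> (fst b) + c * snd b \<le> \<psi> (fst a) + c * snd a"
    and strict: "\<psi> (fst (x, r)) + c * snd (x, r) + 1 \<le> \<psi> x + c * (r - \<eta> / 2 - 1)"
    using separation_times_real[OF lcs _ convex_ereal_epigraph[OF convex not_MInf] disjoint _
        V(1,3,5) zero_less_one box] by blast
  have "c * (\<eta> / 2 + 1) \<le> - 1"
    using strict by (simp add: algebra_simps)
  moreover have "0 \<le> c * (\<eta> / 2 + 1)" if "0 \<le> c"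
    using that assms by simp
  ultimately have "c < 0"
    by linarith
  have "\<psi> y - \<psi> x \<le> (- c) * (s - r + \<eta>)" if "h y = ereal s" for y s
  proof -
    have "(x + 0, r - \<eta>) \<in> A"
      using V(3) assms by (auto simp: A_def)
    moreover have "(y, s) \<in> ereal_epigraph h"
      using that by (simp add: ereal_epigraph_def)
    ultimately show ?thesis
      using sep by (fastforce simp: algebra_simps)
  qed
  then show ?thesis
    using eps_subdiff_divide[OF \<psi>, of "- c"] \<open>c < 0\<close> that by auto
qed

definition ray_minorant :: "'a \<Rightarrow> real \<Rightarrow> real \<Rightarrow> bool" where
  "ray_minorant z \<gamma> \<epsilon> \<longleftrightarrow> (\<forall>s>0. ereal (r + s * \<gamma> - \<epsilon>) \<le> h (x + s *\<^sub>R z))"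

lemma ray_minorant_eps_subdiff:
  assumes "\<psi> \<in> eps_subdiff tau \<epsilon> h x"
  shows "ray_minorant z (\<psi> z) \<epsilon>"
proof -
  have "\<psi> (x + s *\<^sub>R z) - \<psi> x = s * \<psi> z" for s
    using tdual_linear[of \<psi> tau] assms by (simp add: eps_subdiff_iff linear_add linear_scale)
  moreover have "ereal r + ereal (\<psi> y - \<psi> x - \<epsilon>) \<le> h y" for y
    using assms by (simp add: eps_subdiff_def at_x)
  ultimately show ?thesis
    unfolding ray_minorant_def by (metis add.commute add_diff_eq plus_ereal.simps(1))
qed

lemma ray_lower_bound_near:
  assumes "\<psi> \<in> eps_subdiff tau (\<epsilon> / 2) h x" "0 < s" "s * (\<beta> - \<psi> d) \<le> \<epsilon> / 2"
  shows "ereal (r + s * \<beta> - \<epsilon>) \<le> h (x + s *\<^sub>R d)"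
proof -
  have "ereal (r + s * \<beta> - \<epsilon>) \<le> ereal (r + s * \<psi> d - \<epsilon> / 2)"
    using assms(3) by (simp add: algebra_simps)
  also have "\<dots> \<le> h (x + s *\<^sub>R d)"
    using ray_minorant_eps_subdiff[OF assms(1), of d] assms(2) by (simp add: ray_minorant_def)
  finally show ?thesis .
qed

lemma ray_lower_bound_propagates:
  assumes "0 < a" "a \<le> s" "\<epsilon> * (s - a) \<le> a * s * \<theta> / 2"
    and "ereal (r + a * (\<gamma> - \<theta> / 2) - \<epsilon>) < h (x + a *\<^sub>R d)"
  shows "ereal (r + s * (\<gamma> - \<theta>) - \<epsilon>) \<le> h (x + s *\<^sub>R d)"
proof (cases rule: value_cases[of "x + s *\<^sub>R d"])
  case (real R)
  have "ereal (r + a * (\<gamma> - \<theta> / 2) - \<epsilon>) < ereal ((a / s) * R + (1 - a / s) * r)"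
    using assms(4) convex_fun_chord[OF convex at_x assms(1,2) real] by (rule less_le_trans)
  then have "r + s * (\<gamma> - \<theta>) - \<epsilon> \<le> R"
    by (intro chord_lower_bound_transfer[OF assms(1-3)]) simp
  then show ?thesis
    using real by simp
qed simp

lemma ray_minorant_nbhd:
  assumes ray: "ray_minorant z \<gamma> \<epsilon>" and "0 < \<epsilon>" "\<beta> < \<gamma>"
  obtains V where "openin tau V" "convex V" "0 \<in> V" "\<And>v. v \<in> V \<Longrightarrow> - v \<in> V"
    "\<And>v. v \<in> V \<Longrightarrow> ray_minorant (z + v) \<beta> \<epsilon>"
proof -
  define \<theta> where "\<theta> = \<gamma> - \<beta>"
  have "0 < \<theta>" "0 < \<epsilon> / 2"
    using assms by (auto simp: \<theta>_def)
  obtain \<psi>0 where \<psi>0: "\<psi>0 \<in> eps_subdiff tau (\<epsilon> / 2) h x"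
    using eps_subdiff_nonempty[OF \<open>0 < \<epsilon> / 2\<close>] by blast
  have \<psi>0_tdual: "\<psi>0 \<in> tdual tau"
    using \<psi>0 by (simp add: eps_subdiff_def)
  define M where "M = \<bar>\<psi>0 z - 1 - \<beta>\<bar> + 1"
  define s0 where "s0 = \<epsilon> / (2 * M)"
  have "0 < M"
    by (simp add: M_def add_nonneg_pos)
  then have "0 < s0" "s0 * M = \<epsilon> / 2"
    using assms(2) by (simp_all add: s0_def)
  obtain G where G: "finite G" "G \<subseteq> {s0..}"
    and grid: "\<And>s. s0 \<le> s \<Longrightarrow> \<exists>a\<in>G. a \<le> s \<and> \<epsilon> * (s - a) \<le> a * s * \<theta> / 2"
    using finite_grid_below[OF \<open>0 < s0\<close> \<open>0 < \<theta>\<close> assms(2)] by blast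
  define Wa where "Wa a = {v. a *\<^sub>R v + (x + a *\<^sub>R z) \<in> {y. ereal (r + a * (\<gamma> - \<theta> / 2) - \<epsilon>) < h y}}" for a
  define W where "W = {v \<in> topspace tau. \<psi>0 v \<in> {-1<..<1}} \<inter> ((\<Inter>a\<in>G. Wa a) \<inter> topspace tau)"
  have "openin tau ((\<Inter>a\<in>G. Wa a) \<inter> topspace tau)"
    unfolding Wa_def using G(1)
    by (intro openin_INT sep_lcs_openin_affine_vimage[OF lcs] lsc_fun_openin_superlevel[OF lcs lsc])
  moreover have "openin tau {v \<in> topspace tau. \<psi>0 v \<in> {-1<..<1}}"
    using \<psi>0_tdual by (intro openin_continuous_map_preimage) (auto simp: tdual_def)
  ultimately have "openin tau W"
    unfolding W_def by (rule openin_Int[rotated])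
  moreover have "0 \<in> W"
  proof -
    have "0 \<in> Wa a" if "a \<in> G" for a
    proof -
      have "0 < a"
        using that G(2) \<open>0 < s0\<close> by auto
      then have "ereal (r + a * (\<gamma> - \<theta> / 2) - \<epsilon>) < ereal (r + a * \<gamma> - \<epsilon>)"
        using \<open>0 < \<theta>\<close> by (simp add: algebra_simps)
      also have "\<dots> \<le> h (x + a *\<^sub>R z)"
        using ray \<open>0 < a\<close> by (simp add: ray_minorant_def)
      finally show ?thesis
        by (simp add: Wa_def)
    qed
    then show ?thesis
      using linear_0[OF tdual_linear[OF \<psi>0_tdual]] sep_lcs_topspace[OF lcs] by (simp add: W_def)
  qed
  ultimately obtain V where V: "openin tau V" "convex V" "0 \<in> V" "V \<subseteq> W" "\<And>v. v \<in> V \<Longrightarrow> - v \<in> V"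
    using sep_lcs_symmetric_convex_nbhd[OF lcs] by metis
  have small: "ereal (r + s * \<beta> - \<epsilon>) \<le> h (x + s *\<^sub>R (z + v))" if "v \<in> W" "0 < s" "s < s0" for v s
  proof (rule ray_lower_bound_near[OF \<psi>0 that(2)])
    have "\<beta> - \<psi>0 (z + v) \<le> M"
      using that(1) linear_add[OF tdual_linear[OF \<psi>0_tdual]] by (auto simp: W_def M_def)
    then have "s * (\<beta> - \<psi>0 (z + v)) \<le> s * M"
      using that(2) by (intro mult_left_mono) auto
    also have "\<dots> \<le> s0 * M"
      using that(3) \<open>0 < M\<close> by (intro mult_right_mono) auto
    finally show "s * (\<beta> - \<psi>0 (z + v)) \<le> \<epsilon> / 2"
      using \<open>s0 * M = \<epsilon> / 2\<close> by simp
  qed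
  have large: "ereal (r + s * \<beta> - \<epsilon>) \<le> h (x + s *\<^sub>R (z + v))" if vW: "v \<in> W" and s: "s0 \<le> s" for v s
  proof -
    obtain a where a: "a \<in> G" "a \<le> s" "\<epsilon> * (s - a) \<le> a * s * \<theta> / 2"
      using grid[OF s] by blast
    moreover have "0 < a"
      using a(1) G(2) \<open>0 < s0\<close> by auto
    moreover have "ereal (r + a * (\<gamma> - \<theta> / 2) - \<epsilon>) < h (x + a *\<^sub>R (z + v))"
      using vW a(1) by (auto simp: W_def Wa_def algebra_simps)
    ultimately show ?thesis
      using ray_lower_bound_propagates[of a s \<epsilon> \<theta> \<gamma> "z + v"] by (simp add: \<theta>_def)
  qed
  show ?thesis
  proof (rule that[OF V(1-3,5)])
    show "ray_minorant (z + v) \<beta> \<epsilon>" if "v \<in> V" for v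
      using small[of v] large[of v] that V(4) unfolding ray_minorant_def by force
  qed
qed

lemma ray_minorant_cone_disjoint:
  assumes "0 < \<epsilon>" and ray: "\<And>v. v \<in> V \<Longrightarrow> ray_minorant (z + v) \<beta> \<epsilon>"
  shows "((\<lambda>v. z + v) ` V \<times> {..<\<beta>}) \<inter>
    convex_cone hull ((\<lambda>p. p - (x, r - \<epsilon>)) ` ereal_epigraph h) = {}"
proof (intro equals0I)
  fix p assume p: "p \<in> ((\<lambda>v. z + v) ` V \<times> {..<\<beta>}) \<inter>
    convex_cone hull ((\<lambda>p. p - (x, r - \<epsilon>)) ` ereal_epigraph h)"
  have "convex ((\<lambda>p. p - (x, r - \<epsilon>)) ` ereal_epigraph h)"
    by (intro convex_translation_subtract convex_ereal_epigraph convex not_MInf)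
  moreover have "(x, r) \<in> ereal_epigraph h"
    by (simp add: ereal_epigraph_def at_x)
  ultimately obtain q l where "q \<in> ereal_epigraph h" "0 \<le> l" "p = l *\<^sub>R (q - (x, r - \<epsilon>))"
    using p convex_cone_hull_convex_iff[of "(\<lambda>p. p - (x, r - \<epsilon>)) ` ereal_epigraph h" p] by blast
  moreover obtain y s where "q = (y, s)"
    by (cases q)
  ultimately have ys: "h y \<le> ereal s" and "0 \<le> l" and p_cone: "p = l *\<^sub>R (y - x, s - r + \<epsilon>)"
    by (auto simp: ereal_epigraph_def)
  obtain v \<rho> where v: "v \<in> V" "\<rho> < \<beta>" and p_cyl: "p = (z + v, \<rho>)"
    using p by auto
  show False
  proof (cases "l = 0")
    case True
    then have "z + v = 0" "\<rho> = 0"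
      using p_cone p_cyl by auto
    have "\<not> 0 < \<beta>"
    proof
      assume "0 < \<beta>"
      then have "ereal (r + (2 * \<epsilon> / \<beta>) * \<beta> - \<epsilon>) \<le> h (x + (2 * \<epsilon> / \<beta>) *\<^sub>R (z + v))"
        using ray[OF v(1)] assms(1) unfolding ray_minorant_def by (metis divide_pos_pos zero_less_numeral mult_pos_pos)
      then show False
        using \<open>z + v = 0\<close> \<open>0 < \<beta>\<close> assms(1) by (simp add: at_x)
    qed
    then show False
      using v(2) \<open>\<rho> = 0\<close> by simp
  next
    case False
    then have "0 < l"
      using \<open>0 \<le> l\<close> by simp
    have "z + v = l *\<^sub>R (y - x)" "\<rho> = l * (s - r + \<epsilon>)"
      using p_cone p_cyl by simp_all
    then have y: "y = x + (1 / l) *\<^sub>R (z + v)" and s: "s = r - \<epsilon> + (1 / l) * \<rho>"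
      using \<open>0 < l\<close> by simp_all
    have "ereal (r + (1 / l) * \<beta> - \<epsilon>) \<le> ereal s"
      using ray[OF v(1)] \<open>0 < l\<close> ys unfolding ray_minorant_def y by (meson order_trans zero_less_divide_1_iff)
    moreover have "(1 / l) * \<rho> < (1 / l) * \<beta>"
      using v(2) \<open>0 < l\<close> by (simp add: divide_strict_right_mono)
    ultimately show False
      using s by simp
  qed
qed

lemma ray_minorant_cone_separation:
  assumes ray: "ray_minorant z \<gamma> \<epsilon>" and "0 < \<epsilon>" "\<beta> < \<gamma>"
  obtains \<psi> c where "\<psi> \<in> tdual tau"
    "\<And>l y s. 0 \<le> l \<Longrightarrow> h y = ereal s \<Longrightarrow> l * (\<psi> y - \<psi> x + c * (s - r + \<epsilon>)) \<le> \<psi> z + c * \<beta>"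
    "c = 0 \<Longrightarrow> 1 \<le> \<psi> z"
proof -
  define \<beta>' where "\<beta>' = (\<beta> + \<gamma>) / 2"
  have "\<beta>' < \<gamma>" "\<beta> < \<beta>'"
    using assms(3) by (auto simp: \<beta>'_def)
  obtain V where V: "openin tau V" "convex V" "0 \<in> V" "\<And>v. v \<in> V \<Longrightarrow> - v \<in> V"
    and ray_V: "\<And>v. v \<in> V \<Longrightarrow> ray_minorant (z + v) \<beta>' \<epsilon>"
    using ray_minorant_nbhd[OF ray assms(2) \<open>\<beta>' < \<gamma>\<close>] by blast
  define A where "A = (\<lambda>v. z + v) ` V \<times> {..<\<beta>'}"
  define B where "B = convex_cone hull ((\<lambda>p. p - (x, r - \<epsilon>)) ` ereal_epigraph h)"
  have convex_A: "convex A"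
    unfolding A_def using V(2) by (intro convex_Times convex_translation) auto
  have convex_B: "convex B"
    unfolding B_def by (simp add: convex_convex_cone_hull)
  have disjoint: "A \<inter> B = {}"
    unfolding A_def B_def by (rule ray_minorant_cone_disjoint[OF assms(2) ray_V])
  have epi_B: "l *\<^sub>R ((y, s) - (x, r - \<epsilon>)) \<in> B" if "0 \<le> l" "h y \<le> ereal s" for l y s
  proof -
    have "(y, s) \<in> ereal_epigraph h"
      using that(2) by (simp add: ereal_epigraph_def)
    then have "(y, s) - (x, r - \<epsilon>) \<in> B"
      unfolding B_def by (intro hull_inc imageI)
    then show ?thesis
      unfolding B_def using that(1) by (rule convex_cone_hull_mul)
  qed
  have B_\<epsilon>: "(0, \<epsilon>) \<in> B"
    using epi_B[of 1 x r] at_x by simp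
  have box: "(z + v, (\<beta>' - 1) + \<rho>) \<in> A" if "v \<in> V" "\<bar>\<rho>\<bar> < 1" for v \<rho>
    using that by (auto simp: A_def)
  have "\<exists>\<psi> c. \<psi> \<in> tdual tau \<and> (\<forall>a\<in>A. \<forall>b\<in>B. \<psi> (fst b) + c * snd b \<le> \<psi> (fst a) + c * snd a) \<and>
      \<psi> (fst (0, \<epsilon>)) + c * snd (0, \<epsilon>) + 1 \<le> \<psi> z + c * (\<beta>' - 1)"
    using separation_times_real[OF lcs convex_A convex_B disjoint B_\<epsilon> V(1,3,4) zero_less_one box]
    by simp
  then obtain \<psi> c where \<psi>: "\<psi> \<in> tdual tau"
    and sep: "\<forall>a\<in>A. \<forall>b\<in>B. \<psi> (fst b) + c * snd b \<le> \<psi> (fst a) + c * snd a"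
    and strict: "\<psi> 0 + c * \<epsilon> + 1 \<le> \<psi> z + c * (\<beta>' - 1)"
    by auto
  have lin: "linear \<psi>"
    by (rule tdual_linear[OF \<psi>])
  have "z \<in> (\<lambda>v. z + v) ` V"
    using V(3) by (rule rev_image_eqI) simp
  then have "(z, \<beta>) \<in> A"
    using \<open>\<beta> < \<beta>'\<close> by (simp add: A_def)
  show ?thesis
  proof (rule that[OF \<psi>])
    show "l * (\<psi> y - \<psi> x + c * (s - r + \<epsilon>)) \<le> \<psi> z + c * \<beta>"
      if "0 \<le> l" "h y = ereal s" for l y s
    proof -
      have "\<psi> (l *\<^sub>R (y - x)) + c * (l * (s - (r - \<epsilon>))) \<le> \<psi> z + c * \<beta>"
        using sep \<open>(z, \<beta>) \<in> A\<close> epi_B[of l y s] that by fastforce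
      then show ?thesis
        using linear_diff[OF lin] linear_scale[OF lin] by (simp add: algebra_simps)
    qed
    show "1 \<le> \<psi> z" if "c = 0"
      using strict linear_0[OF lin] that by simp
  qed
qed

lemma ray_minorant_separating_functional:
  assumes ray: "ray_minorant z \<gamma> \<epsilon>" and "0 < \<epsilon>" "\<beta> < \<gamma>"
  obtains \<psi> k where "\<psi> \<in> tdual tau" "0 \<le> k"
    "\<And>y s. h y = ereal s \<Longrightarrow> \<psi> y - \<psi> x \<le> k * (s - r + \<epsilon>)" "k * \<beta> < \<psi> z"
proof -
  define \<beta>' where "\<beta>' = (\<beta> + \<gamma>) / 2"
  have "\<beta> < \<beta>'" "\<beta>' < \<gamma>"
    using assms(3) by (auto simp: \<beta>'_def)
  obtain \<psi> c where \<psi>: "\<psi> \<in> tdual tau"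
    and key: "\<And>l y s. 0 \<le> l \<Longrightarrow> h y = ereal s \<Longrightarrow>
      l * (\<psi> y - \<psi> x + c * (s - r + \<epsilon>)) \<le> \<psi> z + c * \<beta>'"
    and c0: "c = 0 \<Longrightarrow> 1 \<le> \<psi> z"
    using ray_minorant_cone_separation[OF ray assms(2) \<open>\<beta>' < \<gamma>\<close>] by blast
  have dom: "\<psi> y - \<psi> x + c * (s - r + \<epsilon>) \<le> 0" if "h y = ereal s" for y s
    using key[OF _ that] by (intro nonpos_if_nonneg_multiples_bounded) blast
  have "c \<le> 0"
    using dom[OF at_x] assms(2) by (simp add: mult_le_0_iff)
  show ?thesis
  proof (rule that[OF \<psi>, of "- c"])
    show "0 \<le> - c"
      using \<open>c \<le> 0\<close> by simp
    show "\<psi> y - \<psi> x \<le> - c * (s - r + \<epsilon>)" if "h y = ereal s" for y s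
      using dom[OF that] by simp
    show "- c * \<beta> < \<psi> z"
    proof (cases "c = 0")
      case True
      then show ?thesis
        using c0 by simp
    next
      case False
      then have "- c * \<beta> < - c * \<beta>'"
        using \<open>c \<le> 0\<close> \<open>\<beta> < \<beta>'\<close> by simp
      also have "\<dots> \<le> \<psi> z"
        using key[OF order_refl at_x] by simp
      finally show ?thesis .
    qed
  qed
qed

lemma eps_subdiff_add_nonincreasing:
  assumes "\<psi>1 \<in> eps_subdiff tau \<epsilon> h x" "\<psi> \<in> tdual tau" "0 \<le> \<mu>"
    and "\<And>y s. h y = ereal s \<Longrightarrow> \<psi> y \<le> \<psi> x"
  shows "(\<lambda>y. \<psi>1 y + \<mu> * \<psi> y) \<in> eps_subdiff tau \<epsilon> h x"
proof -
  have "(\<lambda>y. 1 * \<psi>1 y + \<mu> * \<psi> y) \<in> tdual tau"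
    using assms(1,2) by (intro tdual_lincomb) (auto simp: eps_subdiff_def)
  moreover have "\<mu> * \<psi> y \<le> \<mu> * \<psi> x" if "h y = ereal s" for y s
    using assms(4)[OF that] assms(3) by (rule mult_left_mono)
  ultimately show ?thesis
    using assms(1) by (fastforce simp: eps_subdiff_iff)
qed

lemma eps_subdiff_exists_gt:
  assumes "ray_minorant z \<gamma> \<epsilon>" "0 < \<epsilon>" "\<beta> < \<gamma>"
  obtains \<psi> where "\<psi> \<in> eps_subdiff tau \<epsilon> h x" "\<beta> < \<psi> z"
proof -
  obtain \<psi> k where \<psi>: "\<psi> \<in> tdual tau" "0 \<le> k"
    and dom: "\<And>y s. h y = ereal s \<Longrightarrow> \<psi> y - \<psi> x \<le> k * (s - r + \<epsilon>)" and gt: "k * \<beta> < \<psi> z"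
    using ray_minorant_separating_functional[OF assms] by blast
  show ?thesis
  proof (cases "k = 0")
    case True
    obtain \<psi>1 where \<psi>1: "\<psi>1 \<in> eps_subdiff tau \<epsilon> h x"
      using eps_subdiff_nonempty[OF assms(2)] by blast
    define \<mu> where "\<mu> = (\<bar>\<beta> - \<psi>1 z\<bar> + 1) / \<psi> z"
    have "0 < \<psi> z"
      using gt True by simp
    then have "0 \<le> \<mu>" "\<beta> < \<psi>1 z + \<mu> * \<psi> z"
      by (auto simp: \<mu>_def)
    moreover have "(\<lambda>y. \<psi>1 y + \<mu> * \<psi> y) \<in> eps_subdiff tau \<epsilon> h x"
      using dom True by (intro eps_subdiff_add_nonincreasing[OF \<psi>1 \<psi>(1) \<open>0 \<le> \<mu>\<close>]) simp
    ultimately show ?thesis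
      using that by auto
  next
    case False
    with \<psi>(2) have "0 < k" by simp
    then have "(\<lambda>y. \<psi> y / k) \<in> eps_subdiff tau \<epsilon> h x" "\<beta> < \<psi> z / k"
      using eps_subdiff_divide[OF \<psi>(1) _ dom] gt by (auto simp: field_simps)
    then show ?thesis
      using that by auto
  qed
qed

end

section \<open>Weak-star topology\<close>

lemma eps_subdiff_closedin_weak_star:
  assumes "f x = ereal r"
  shows "closedin (weak_star tau) (eps_subdiff tau \<epsilon> f x)"
proof -
  define G where "G y = {\<psi> :: 'a \<Rightarrow> real. ereal r + ereal (\<psi> y - \<psi> x - \<epsilon>) \<le> f y}" for y
  have "closedin (powertop_real UNIV) (G y)" for y
  proof (cases "f y")
    case (real s)
    have "G y = {\<psi> \<in> topspace (powertop_real UNIV). (\<lambda>\<psi>. \<psi> y - \<psi> x) \<psi> \<in> {..s - r + \<epsilon>}}"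
      by (auto simp: G_def real)
    also have "closedin (powertop_real UNIV) \<dots>"
      by (rule closedin_continuous_map_preimage)
        (auto intro!: continuous_map_diff continuous_map_product_projection)
    finally show ?thesis .
  qed (use closedin_topspace[of "powertop_real UNIV"] in \<open>auto simp: G_def\<close>)
  then have "closedin (powertop_real UNIV) (\<Inter> (range G))"
    by (intro closedin_Inter) auto
  moreover have "eps_subdiff tau \<epsilon> f x = \<Inter> (range G) \<inter> tdual tau"
    by (auto simp: eps_subdiff_def G_def assms)
  ultimately show ?thesis
    unfolding weak_star_def closedin_subtopology by blast
qed

lemma fconvex_eps_subdiff:
  assumes "f x = ereal r"
  shows "fconvex (eps_subdiff tau \<epsilon> f x)"
  unfolding fconvex_def
proof (intro ballI allI impI)
  fix \<psi>1 \<psi>2 :: "'a \<Rightarrow> real" and u :: real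
  assume \<psi>: "\<psi>1 \<in> eps_subdiff tau \<epsilon> f x" "\<psi>2 \<in> eps_subdiff tau \<epsilon> f x" and u: "0 \<le> u \<and> u \<le> 1"
  have "ereal r + ereal (u * \<psi>1 y + (1 - u) * \<psi>2 y - (u * \<psi>1 x + (1 - u) * \<psi>2 x) - \<epsilon>) \<le> f y" for y
  proof (cases "f y")
    case (real s)
    have sub: "\<forall>y. f x + ereal (\<psi>1 y - \<psi>1 x - \<epsilon>) \<le> f y" "\<forall>y. f x + ereal (\<psi>2 y - \<psi>2 x - \<epsilon>) \<le> f y"
      using \<psi> by (simp_all add: eps_subdiff_def)
    have "\<psi>1 y - \<psi>1 x - \<epsilon> \<le> s - r" "\<psi>2 y - \<psi>2 x - \<epsilon> \<le> s - r"
      using spec[OF sub(1), of y] spec[OF sub(2), of y] real assms by simp_all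
    then have "u * (\<psi>1 y - \<psi>1 x - \<epsilon>) + (1 - u) * (\<psi>2 y - \<psi>2 x - \<epsilon>) \<le> s - r"
      using u by (intro convex_bound_le) auto
    then show ?thesis
      using real by (simp add: algebra_simps)
  next
    case MInf
    have sub: "\<forall>y. f x + ereal (\<psi>1 y - \<psi>1 x - \<epsilon>) \<le> f y"
      using \<psi> by (simp add: eps_subdiff_def)
    then show ?thesis
      using spec[OF sub, of y] MInf assms by simp
  qed simp
  moreover have "(\<lambda>y. u * \<psi>1 y + (1 - u) * \<psi>2 y) \<in> tdual tau"
    using \<psi> by (intro tdual_lincomb) (auto simp: eps_subdiff_def)
  ultimately show "(\<lambda>y. u * \<psi>1 y + (1 - u) * \<psi>2 y) \<in> eps_subdiff tau \<epsilon> f x"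
    using assms by (simp add: eps_subdiff_def)
qed

lemma fconvex_imp_convex: "fconvex S \<Longrightarrow> convex S"
  unfolding fconvex_def convex_alt by (auto simp: add.commute plus_fun_def)

lemma fun_sum_apply: "(\<Sum>y\<in>Y. f y) i = (\<Sum>y\<in>Y. f y i)"
  by (induction Y rule: infinite_finite_induct) auto

lemma linear_functional_finite_coordinates:
  fixes L :: "('a::real_vector \<Rightarrow> real) \<Rightarrow> real"
  assumes L: "linear L" and "finite Y" and vanish: "\<And>w. (\<And>y. y \<in> Y \<Longrightarrow> w y = 0) \<Longrightarrow> L w = 0"
  obtains z :: 'a where "\<And>\<psi>. linear \<psi> \<Longrightarrow> L \<psi> = \<psi> z"
proof
  define e :: "'a \<Rightarrow> 'a \<Rightarrow> real" where "e y = (\<lambda>i. if i = y then 1 else 0)" for y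
  fix \<psi> :: "'a \<Rightarrow> real" assume "linear \<psi>"
  have "(\<Sum>y\<in>Y. \<psi> y *\<^sub>R e y) i = \<psi> i" if "i \<in> Y" for i
    using that \<open>finite Y\<close> by (simp add: fun_sum_apply e_def if_distrib[of "\<lambda>t. _ * t"] cong: if_cong)
  then have "L (\<psi> - (\<Sum>y\<in>Y. \<psi> y *\<^sub>R e y)) = 0"
    by (intro vanish) simp
  then have "L \<psi> = (\<Sum>y\<in>Y. \<psi> y * L (e y))"
    by (simp add: linear_diff[OF L] linear_sum[OF L] linear_scale[OF L])
  also have "\<dots> = \<psi> (\<Sum>y\<in>Y. L (e y) *\<^sub>R y)"
    by (simp add: linear_sum[OF \<open>linear \<psi>\<close>] linear_scale[OF \<open>linear \<psi>\<close>] mult.commute)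
  finally show "L \<psi> = \<psi> (\<Sum>y\<in>Y. L (e y) *\<^sub>R y)" .
qed

lemma weak_star_closed_avoids_cylinder:
  assumes cl: "closedin (weak_star tau) S" and "\<phi> \<in> tdual tau" "\<phi> \<notin> S"
  obtains Y \<delta> where "finite Y" "0 < \<delta>"
    "\<And>\<psi>. \<psi> \<in> tdual tau \<Longrightarrow> (\<And>y. y \<in> Y \<Longrightarrow> \<bar>\<psi> y - \<phi> y\<bar> < \<delta>) \<Longrightarrow> \<psi> \<notin> S"
proof -
  obtain C where C: "closedin (powertop_real UNIV) C" and S: "S = C \<inter> tdual tau"
    using cl unfolding weak_star_def closedin_subtopology by blast
  have "openin (powertop_real UNIV) (topspace (powertop_real UNIV) - C)"
    using C by (rule openin_diff[OF openin_topspace])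
  moreover have "\<phi> \<in> topspace (powertop_real UNIV) - C"
    using assms(2,3) S by auto
  ultimately have "\<exists>U. finite {i. U i \<noteq> UNIV} \<and> (\<forall>i. open (U i)) \<and> \<phi> \<in> Pi\<^sub>E UNIV U \<and>
      Pi\<^sub>E UNIV U \<subseteq> topspace (powertop_real UNIV) - C"
    unfolding openin_product_topology_alt by simp
  then obtain U where U: "finite {i. U i \<noteq> UNIV}" "\<And>i. open (U i)" "\<phi> \<in> Pi\<^sub>E UNIV U"
    and U_C: "Pi\<^sub>E UNIV U \<subseteq> topspace (powertop_real UNIV) - C"
    by blast
  define Y where "Y = {i. U i \<noteq> UNIV}"
  have "\<exists>d>0. \<forall>t. \<bar>t - \<phi> y\<bar> < d \<longrightarrow> t \<in> U y" for y
    using U(2)[of y] U(3) unfolding open_dist by (force simp: dist_real_def)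
  then obtain d where d: "\<And>y. d y > 0" "\<And>y t. \<bar>t - \<phi> y\<bar> < d y \<Longrightarrow> t \<in> U y"
    by metis
  define \<delta> where "\<delta> = Min (insert 1 (d ` Y))"
  have "finite Y"
    using U(1) by (simp add: Y_def)
  then have "0 < \<delta>" "\<And>y. y \<in> Y \<Longrightarrow> \<delta> \<le> d y"
    using d(1) by (auto simp: \<delta>_def)
  moreover have "\<psi> \<notin> S" if "\<psi> \<in> tdual tau" "\<And>y. y \<in> Y \<Longrightarrow> \<bar>\<psi> y - \<phi> y\<bar> < \<delta>" for \<psi>
  proof -
    have "\<psi> y \<in> U y" for y
      using d(2)[of "\<psi> y" y] that(2)[of y] \<open>\<And>y. y \<in> Y \<Longrightarrow> \<delta> \<le> d y\<close>[of y] by (cases "y \<in> Y") (auto simp: Y_def)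
    then show ?thesis
      using U_C S by auto
  qed
  ultimately show ?thesis
    using that \<open>finite Y\<close> by blast
qed

lemma convex_cylinder:
  "convex {w :: 'a \<Rightarrow> real. \<forall>y\<in>Y. \<bar>w y - \<phi> y\<bar> < \<delta>}"
  unfolding convex_def
proof (intro CollectI ballI allI impI)
  fix w1 w2 :: "'a \<Rightarrow> real" and u v :: real and y
  assume w: "w1 \<in> {w. \<forall>y\<in>Y. \<bar>w y - \<phi> y\<bar> < \<delta>}" "w2 \<in> {w. \<forall>y\<in>Y. \<bar>w y - \<phi> y\<bar> < \<delta>}"
    and uv: "0 \<le> u" "0 \<le> v" "u + v = 1" and "y \<in> Y"
  have "(u *\<^sub>R w1 + v *\<^sub>R w2) y - \<phi> y = u * (w1 y - \<phi> y) + v * (w2 y - \<phi> y)"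
    using uv(3) by (simp add: algebra_simps flip: distrib_right)
  also have "\<bar>\<dots>\<bar> \<le> u * \<bar>w1 y - \<phi> y\<bar> + v * \<bar>w2 y - \<phi> y\<bar>"
    using uv by (simp add: abs_triangle_ineq[THEN order_trans] abs_mult)
  also have "\<dots> < \<delta>"
    using w \<open>y \<in> Y\<close> uv by (intro convex_bound_lt) auto
  finally show "\<bar>(u *\<^sub>R w1 + v *\<^sub>R w2) y - \<phi> y\<bar> < \<delta>" .
qed

lemma cylinder_core:
  fixes \<phi> w :: "'a \<Rightarrow> real"
  assumes "finite Y" "0 < \<delta>"
  shows "\<exists>e>0. \<forall>y\<in>Y. \<bar>(\<phi> + e *\<^sub>R w) y - \<phi> y\<bar> < \<delta>"
proof -
  define M where "M = 1 + (\<Sum>y\<in>Y. \<bar>w y\<bar>)"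
  have "0 < M"
    by (simp add: M_def add_pos_nonneg sum_nonneg)
  define e where "e = \<delta> / (2 * M)"
  have "0 < e" "e * M = \<delta> / 2"
    using \<open>0 < M\<close> assms(2) by (simp_all add: e_def)
  moreover have "e * \<bar>w y\<bar> < \<delta>" if "y \<in> Y" for y
  proof -
    have "\<bar>w y\<bar> \<le> (\<Sum>y\<in>Y. \<bar>w y\<bar>)"
      using assms(1) that by (intro member_le_sum) auto
    then have "\<bar>w y\<bar> \<le> M"
      by (simp add: M_def)
    then have "e * \<bar>w y\<bar> \<le> e * M"
      using \<open>0 < e\<close> by (intro mult_left_mono) auto
    then show ?thesis
      using \<open>e * M = \<delta> / 2\<close> assms(2) by simp
  qed
  ultimately show ?thesis
    by (intro exI[of _ e]) (simp add: abs_mult)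
qed

lemma weak_star_separation:
  assumes "fconvex S" "closedin (weak_star tau) S" "\<phi> \<in> tdual tau" "\<phi> \<notin> S"
  obtains z \<beta> where "\<beta> < \<phi> z" "\<And>\<psi>. \<psi> \<in> S \<Longrightarrow> \<psi> z \<le> \<beta>"
proof (cases "S = {}")
  case True
  then show ?thesis
    using that[of "-1" 0] linear_0[OF tdual_linear[OF assms(3)]] by simp
next
  case False
  then obtain k0 where "k0 \<in> S" by blast
  have S_dual: "S \<subseteq> tdual tau"
    using closedin_subset[OF assms(2)] by (simp add: weak_star_def)
  obtain Y \<delta> where Y: "finite Y" "0 < \<delta>"
    and avoid: "\<And>\<psi>. \<psi> \<in> tdual tau \<Longrightarrow> (\<And>y. y \<in> Y \<Longrightarrow> \<bar>\<psi> y - \<phi> y\<bar> < \<delta>) \<Longrightarrow> \<psi> \<notin> S"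
    using weak_star_closed_avoids_cylinder[OF assms(2-4)] by blast
  define A where "A = {w. \<forall>y\<in>Y. \<bar>w y - \<phi> y\<bar> < \<delta>}"
  have disjoint: "A \<inter> S = {}"
    using avoid S_dual by (auto simp: A_def)
  have core: "\<exists>e>0. \<phi> + e *\<^sub>R w \<in> A" for w
    using cylinder_core[OF Y, of \<phi> w] by (simp add: A_def)
  have "convex A"
    unfolding A_def by (rule convex_cylinder)
  then obtain L :: "('a \<Rightarrow> real) \<Rightarrow> real" where L: "linear L"
    and sep: "\<And>a b. a \<in> A \<Longrightarrow> b \<in> S \<Longrightarrow> L b \<le> L a" and strict: "L k0 + 1 \<le> L \<phi>"
    by (rule separation_convex_core[OF _ fconvex_imp_convex[OF assms(1)] disjoint \<open>k0 \<in> S\<close> core]) blast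
  have "L w = 0" if "\<And>y. y \<in> Y \<Longrightarrow> w y = 0" for w
  proof (rule linear_eq_0_if_bounded_below_on_line[OF L])
    show "L k0 \<le> L (\<phi> + t *\<^sub>R w)" for t
      using that Y(2) by (intro sep[OF _ \<open>k0 \<in> S\<close>]) (simp add: A_def)
  qed
  then obtain z where eval: "\<And>\<psi>. linear \<psi> \<Longrightarrow> L \<psi> = \<psi> z"
    using linear_functional_finite_coordinates[OF L Y(1)] by blast
  obtain e where "0 < e" "\<phi> + e *\<^sub>R (k0 - \<phi>) \<in> A"
    using cylinder_core[OF Y, of \<phi> "k0 - \<phi>"] by (auto simp: A_def)
  show ?thesis
  proof (rule that)
    show "\<phi> z - e < \<phi> z"
      using \<open>0 < e\<close> by simp
    show "\<psi> z \<le> \<phi> z - e" if "\<psi> \<in> S" for \<psi>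
    proof -
      have "L \<psi> \<le> L \<phi> + e * (L k0 - L \<phi>)"
        using sep[OF \<open>\<phi> + e *\<^sub>R (k0 - \<phi>) \<in> A\<close> that] by (simp add: linear_add[OF L] linear_scale[OF L]
            linear_diff[OF L])
      also have "\<dots> \<le> L \<phi> - e"
        using mult_left_mono[OF strict, of e] \<open>0 < e\<close> by (simp add: algebra_simps)
      finally show ?thesis
        using eval that S_dual assms(3) by (auto dest!: tdual_linear)
    qed
  qed
qed

section \<open>Subdifferential of a pointwise supremum\<close>

lemma wstar_cch_subset_eps_subdiff_majorant:
  assumes "f x = ereal r" and at_x: "\<And>t. t \<in> T \<Longrightarrow> F t x = f x"
    and majorant: "\<And>t z. t \<in> T \<Longrightarrow> F t z \<le> f z"
  shows "wstar_cch tau (\<Union>t\<in>T. eps_subdiff tau \<epsilon> (F t) x) \<subseteq> eps_subdiff tau \<epsilon> f x"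
  unfolding wstar_cch_def
proof (rule hull_minimal)
  show "(\<Union>t\<in>T. eps_subdiff tau \<epsilon> (F t) x) \<subseteq> eps_subdiff tau \<epsilon> f x"
  proof
    fix \<psi> assume "\<psi> \<in> (\<Union>t\<in>T. eps_subdiff tau \<epsilon> (F t) x)"
    then obtain t where t: "t \<in> T" and \<psi>: "\<psi> \<in> eps_subdiff tau \<epsilon> (F t) x"
      by blast
    have sub: "\<forall>y. F t x + ereal (\<psi> y - \<psi> x - \<epsilon>) \<le> F t y"
      using \<psi> by (simp add: eps_subdiff_def)
    have "f x + ereal (\<psi> y - \<psi> x - \<epsilon>) \<le> f y" for y
      using order_trans[OF spec[OF sub, of y] majorant[OF t, of y]] at_x[OF t] by simp
    then show "\<psi> \<in> eps_subdiff tau \<epsilon> f x"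
      using \<psi> assms(1) by (simp add: eps_subdiff_def)
  qed
  show "fconvex (eps_subdiff tau \<epsilon> f x) \<and> closedin (weak_star tau) (eps_subdiff tau \<epsilon> f x)"
    using fconvex_eps_subdiff[of f x r] eps_subdiff_closedin_weak_star[of f x r] assms(1) by blast
qed

lemma Inter_eps_subdiff:
  assumes "f x = ereal r"
  shows "(\<Inter>\<epsilon>\<in>{0<..}. eps_subdiff tau \<epsilon> f x) = eps_subdiff tau 0 f x"
proof (intro equalityI subsetI)
  fix \<phi> assume "\<phi> \<in> (\<Inter>\<epsilon>\<in>{0<..}. eps_subdiff tau \<epsilon> f x)"
  then have \<phi>_eps: "\<phi> \<in> eps_subdiff tau \<epsilon> f x" if "0 < \<epsilon>" for \<epsilon>
    using that by blast
  then have \<phi>: "\<phi> \<in> tdual tau" and sub: "\<And>\<epsilon>. 0 < \<epsilon> \<Longrightarrow> \<forall>y. f x + ereal (\<phi> y - \<phi> x - \<epsilon>) \<le> f y"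
    using \<phi>_eps[OF zero_less_one] by (simp_all add: eps_subdiff_def)
  have "ereal r + ereal (\<phi> y - \<phi> x) \<le> f y" for y
  proof (cases "f y")
    case (real s)
    have "\<phi> y - \<phi> x - \<epsilon> \<le> s - r" if "0 < \<epsilon>" for \<epsilon>
      using spec[OF sub[OF that], of y] real assms by simp
    then have "\<phi> y - \<phi> x \<le> s - r"
      by (metis diff_le_eq field_le_epsilon add.commute)
    then show ?thesis
      using real by simp
  next
    case MInf
    then show ?thesis
      using spec[OF sub[OF zero_less_one], of y] assms by simp
  qed simp
  then show "\<phi> \<in> eps_subdiff tau 0 f x"
    using \<phi> assms by (simp add: eps_subdiff_def)
next
  fix \<phi> assume \<phi>: "\<phi> \<in> eps_subdiff tau 0 f x"
  then have sub: "\<forall>y. f x + ereal (\<phi> y - \<phi> x) \<le> f y"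
    by (simp add: eps_subdiff_def)
  have "f x + ereal (\<phi> y - \<phi> x - \<epsilon>) \<le> f y" if "0 < \<epsilon>" for \<epsilon> y
  proof -
    have "ereal (r + (\<phi> y - \<phi> x - \<epsilon>)) \<le> ereal (r + (\<phi> y - \<phi> x))"
      using that by simp
    then show ?thesis
      using spec[OF sub, of y] assms by (simp del: ereal_less_eq)
  qed
  then show "\<phi> \<in> (\<Inter>\<epsilon>\<in>{0<..}. eps_subdiff tau \<epsilon> f x)"
    using \<phi> by (simp add: eps_subdiff_def)
qed

lemma compact_space_finite_param_subcover:
  assumes "compact_space X" "\<And>s. s \<in> P \<Longrightarrow> openin X (U s)" "topspace X \<subseteq> (\<Union>s\<in>P. U s)"
  obtains Q where "finite Q" "Q \<subseteq> P" "topspace X \<subseteq> (\<Union>s\<in>Q. U s)"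
proof -
  have "\<exists>\<F>. finite \<F> \<and> \<F> \<subseteq> U ` P \<and> topspace X \<subseteq> \<Union>\<F>"
    using assms unfolding compact_space_def compactin_def by (metis (no_types, lifting) imageE)
  then obtain \<F> where "finite \<F>" "\<F> \<subseteq> U ` P" "topspace X \<subseteq> \<Union>\<F>"
    by blast
  then show ?thesis
    using that by (metis finite_subset_image)
qed

lemma uniform_ray_gap:
  fixes F :: "'i \<Rightarrow> 'a::real_vector \<Rightarrow> ereal"
  assumes "compact_space Ttop" and usc: "\<And>z. usc_on Ttop (\<lambda>t. F t z)"
    and convex: "\<And>t. t \<in> topspace Ttop \<Longrightarrow> convex_fun (F t)"
    and at_x: "\<And>t. t \<in> topspace Ttop \<Longrightarrow> F t x = ereal r"
    and not_MInf: "\<And>t y. t \<in> topspace Ttop \<Longrightarrow> F t y \<noteq> -\<infinity>"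
    and gap: "\<And>t. t \<in> topspace Ttop \<Longrightarrow> \<exists>s>0. F t (x + s *\<^sub>R z) < ereal (r + s * \<gamma> - \<epsilon>)"
    and "topspace Ttop \<noteq> {}" "0 < \<epsilon>"
  obtains a \<delta> where "0 < a" "0 < \<delta>"
    "\<And>t. t \<in> topspace Ttop \<Longrightarrow> F t (x + a *\<^sub>R z) \<le> ereal (r + a * \<gamma> - \<delta>)"
proof -
  define U where "U s = {t \<in> topspace Ttop. F t (x + s *\<^sub>R z) < ereal (r + s * \<gamma> - \<epsilon>)}" for s
  have "openin Ttop (U s)" for s
    using usc[of "x + s *\<^sub>R z"] by (simp add: usc_on_def U_def)
  moreover have "topspace Ttop \<subseteq> (\<Union>s\<in>{0<..}. U s)"
    using gap by (auto simp: U_def)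
  ultimately obtain Q where Q: "finite Q" "Q \<subseteq> {0<..}" "topspace Ttop \<subseteq> (\<Union>s\<in>Q. U s)"
    using compact_space_finite_param_subcover[OF assms(1)] by metis
  then have "Q \<noteq> {}"
    using assms(7) by auto
  define a where "a = Min Q"
  define b where "b = Max Q"
  have "a \<in> Q" "0 < a" "\<And>s. s \<in> Q \<Longrightarrow> a \<le> s \<and> s \<le> b"
    using Q \<open>Q \<noteq> {}\<close> by (auto simp: a_def b_def)
  then have "0 < b"
    by force
  have "F t (x + a *\<^sub>R z) \<le> ereal (r + a * \<gamma> - \<epsilon> * a / b)" if t: "t \<in> topspace Ttop" for t
  proof -
    obtain s where s: "s \<in> Q" "F t (x + s *\<^sub>R z) < ereal (r + s * \<gamma> - \<epsilon>)"
      using Q(3) t by (auto simp: U_def)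
    then obtain R where R: "F t (x + s *\<^sub>R z) = ereal R" "R < r + s * \<gamma> - \<epsilon>"
      using not_MInf[OF t] by (cases "F t (x + s *\<^sub>R z)") auto
    have "0 < s" "a \<le> s" "s \<le> b"
      using s(1) Q(2) \<open>\<And>s. s \<in> Q \<Longrightarrow> a \<le> s \<and> s \<le> b\<close> by auto
    have chord: "F t (x + a *\<^sub>R z) \<le> ereal ((a / s) * R + (1 - a / s) * r)"
      by (rule convex_fun_chord[OF convex[OF t] at_x[OF t] \<open>0 < a\<close> \<open>a \<le> s\<close> R(1)])
    have "(a / s) * R \<le> (a / s) * (r + s * \<gamma> - \<epsilon>)"
      using R(2) \<open>0 < a\<close> \<open>0 < s\<close> by (intro mult_left_mono) auto
    moreover have "(a / s) * (r + s * \<gamma> - \<epsilon>) = (a / s) * r + a * \<gamma> - \<epsilon> * a / s"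
      using \<open>0 < s\<close> by (simp add: field_simps)
    moreover have "\<epsilon> * a / b \<le> \<epsilon> * a / s"
      using \<open>s \<le> b\<close> \<open>0 < s\<close> \<open>0 < a\<close> assms(8) by (intro divide_left_mono) auto
    ultimately have "(a / s) * R + (1 - a / s) * r \<le> r + a * \<gamma> - \<epsilon> * a / b"
      by (simp add: algebra_simps)
    then show ?thesis
      using chord by (simp add: order_trans)
  qed
  then show ?thesis
    using that[OF \<open>0 < a\<close>, of "\<epsilon> * a / b"] \<open>0 < a\<close> \<open>0 < b\<close> assms(8) by simp
qed

lemma eps_subdiff_Sup_subset_wstar_cch:
  fixes F :: "'i \<Rightarrow> 'a::real_vector \<Rightarrow> ereal"
  assumes "compact_space Ttop" "topspace Ttop \<noteq> {}" and usc: "\<And>z. usc_on Ttop (\<lambda>t. F t z)"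
    and fam: "\<And>t. t \<in> topspace Ttop \<Longrightarrow> proper_convex_lsc_at tau (F t) x r"
    and "0 < \<epsilon>" and \<phi>: "\<phi> \<in> eps_subdiff tau 0 (\<lambda>z. SUP t\<in>topspace Ttop. F t z) x"
  shows "\<phi> \<in> wstar_cch tau (\<Union>t\<in>topspace Ttop. eps_subdiff tau \<epsilon> (F t) x)"
proof (rule ccontr)
  define T where "T = topspace Ttop"
  assume "\<phi> \<notin> wstar_cch tau (\<Union>t\<in>topspace Ttop. eps_subdiff tau \<epsilon> (F t) x)"
  then obtain S where S: "fconvex S" "closedin (weak_star tau) S"
    "\<And>t. t \<in> T \<Longrightarrow> eps_subdiff tau \<epsilon> (F t) x \<subseteq> S" "\<phi> \<notin> S"
    unfolding wstar_cch_def hull_def T_def by blast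
  have "\<phi> \<in> tdual tau"
    using \<phi> by (simp add: eps_subdiff_def)
  then obtain z \<beta> where z: "\<beta> < \<phi> z" "\<And>\<psi>. \<psi> \<in> S \<Longrightarrow> \<psi> z \<le> \<beta>"
    using weak_star_separation[OF S(1,2) _ S(4)] by blast
  have gap: "\<exists>s>0. F t (x + s *\<^sub>R z) < ereal (r + s * \<phi> z - \<epsilon>)" if t: "t \<in> T" for t
  proof (rule ccontr)
    interpret proper_convex_lsc_at tau "F t" x r
      using fam t by (simp add: T_def)
    assume "\<not> (\<exists>s>0. F t (x + s *\<^sub>R z) < ereal (r + s * \<phi> z - \<epsilon>))"
    then have "ray_minorant z (\<phi> z) \<epsilon>"
      unfolding ray_minorant_def using not_less by blast
    then obtain \<psi> where "\<psi> \<in> eps_subdiff tau \<epsilon> (F t) x" "\<beta> < \<psi> z"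
      using eps_subdiff_exists_gt[OF _ \<open>0 < \<epsilon>\<close> z(1)] by blast
    then show False
      using S(3)[OF t] z(2) by fastforce
  qed
  have F_t: "convex_fun (F t)" "F t x = ereal r" "F t y \<noteq> -\<infinity>" if "t \<in> T" for t y
    using fam[of t] that by (simp_all add: proper_convex_lsc_at_def T_def)
  obtain a \<delta> where "0 < a" "0 < \<delta>" and below: "\<And>t. t \<in> T \<Longrightarrow> F t (x + a *\<^sub>R z) \<le> ereal (r + a * \<phi> z - \<delta>)"
    using uniform_ray_gap[OF assms(1) usc F_t(1,2,3) gap assms(2) \<open>0 < \<epsilon>\<close>] unfolding T_def by blast
  have "(SUP t\<in>T. F t x) = ereal r"
    using F_t(2) assms(2) by (simp add: T_def)
  then have "ereal r + ereal (\<phi> (x + a *\<^sub>R z) - \<phi> x) \<le> (SUP t\<in>T. F t (x + a *\<^sub>R z))"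
    using \<phi> by (simp add: eps_subdiff_def T_def)
  also have "\<dots> \<le> ereal (r + a * \<phi> z - \<delta>)"
    using below by (rule SUP_least)
  finally show False
    using \<open>0 < \<delta>\<close> linear_add[OF tdual_linear[OF \<open>\<phi> \<in> tdual tau\<close>]]
      linear_scale[OF tdual_linear[OF \<open>\<phi> \<in> tdual tau\<close>]] by simp
qed

theorem corollary8:
  fixes tau :: "'a::real_vector topology"
    and Ttop :: "'i topology"
    and F :: "'i \<Rightarrow> 'a \<Rightarrow> ereal"
    and x :: 'a
  assumes X: "sep_lcs tau"
    and T_ne: "topspace Ttop \<noteq> {}"
    and fam: "\<And>t. t \<in> topspace Ttop \<Longrightarrow> proper_fun (F t) \<and> convex_fun (F t) \<and> lsc_fun tau (F t)"
    and SH_cpt: "compact_space Ttop" and SH_haus: "Hausdorff_space Ttop"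
    and SH_usc: "\<And>z. usc_on Ttop (\<lambda>t. F t z)"
    and dom: "(SUP t\<in>topspace Ttop. F t x) < \<infinity>"
    and active: "\<And>t. t \<in> topspace Ttop \<Longrightarrow> F t x = (SUP s\<in>topspace Ttop. F s x)"
  shows "eps_subdiff tau 0 (\<lambda>z. SUP t\<in>topspace Ttop. F t z) x =
         (\<Inter>\<epsilon>\<in>{0<..}. wstar_cch tau (\<Union>t\<in>topspace Ttop. eps_subdiff tau \<epsilon> (F t) x))"
proof -
  define f where "f z = (SUP t\<in>topspace Ttop. F t z)" for z
  obtain t0 where t0: "t0 \<in> topspace Ttop"
    using T_ne by blast
  have "f x = F t0 x"
    using active[OF t0] by (simp add: f_def)
  moreover have "F t0 x \<noteq> -\<infinity>"
    using fam[OF t0] by (simp add: proper_fun_def)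
  ultimately have "f x \<noteq> -\<infinity>"
    by simp
  moreover have "f x \<noteq> \<infinity>"
    using dom by (simp add: f_def)
  ultimately obtain r where r: "f x = ereal r"
    by (cases "f x" rule: ereal_cases) simp_all
  have lsc_at: "proper_convex_lsc_at tau (F t) x r" if "t \<in> topspace Ttop" for t
    using fam[OF that] active[OF that] X r unfolding proper_convex_lsc_at_def proper_fun_def f_def by auto
  have sub: "eps_subdiff tau 0 f x \<subseteq> (\<Inter>\<epsilon>\<in>{0<..}. wstar_cch tau (\<Union>t\<in>topspace Ttop. eps_subdiff tau \<epsilon> (F t) x))"
    using eps_subdiff_Sup_subset_wstar_cch[OF SH_cpt T_ne SH_usc lsc_at] unfolding f_def by blast
  have "wstar_cch tau (\<Union>t\<in>topspace Ttop. eps_subdiff tau \<epsilon> (F t) x) \<subseteq> eps_subdiff tau \<epsilon> f x"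
    for \<epsilon>
    by (rule wstar_cch_subset_eps_subdiff_majorant[of f x r]) (use r active in \<open>auto simp: f_def intro: SUP_upper\<close>)
  then have "(\<Inter>\<epsilon>\<in>{0<..}. wstar_cch tau (\<Union>t\<in>topspace Ttop. eps_subdiff tau \<epsilon> (F t) x))
      \<subseteq> eps_subdiff tau 0 f x"
    unfolding Inter_eps_subdiff[of f x r tau, OF r, symmetric] by blast
  with sub show ?thesis
    unfolding f_def by blast
qed

end
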